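(* Let $q_0\in M$ and $p_0\in\mathbb{R}^n$. The Euclidean gradient of $\hat{J}_1$ at $p_0$ is $\nabla\hat{J}_1(p_0)=K_{q_0}p_0+\alpha(1)$, where $(z(\cdot),\alpha(\cdot))$ is the solution of \begin{equation*} \begin{split} \dot{z}(t)&=\nabla_{q}\big(p(1-t)^TK_{q(1-t)}z(t)\big)-\frac{1}{2}\partial_q\Big(\nabla_q\big(p(1-t)^TK_{q(1-t)}p(1-t)\big)\Big).\alpha(t), \\ \dot{\alpha}(t)&=K_{q(1-t)}z(t)-\partial_q\big(K_{q(1-t)}p(1-t)\big).\alpha(t) \end{split} \end{equation*} with $(z(0),\alpha(0))=(\nabla g(q(1)),0)$, and $(q(t),p(t))$ satisfies the geodesic equations $\dot{q}(t)=K_{q(t)}p(t)$ and $\dot{p}(t) = -\frac{1}{2}\nabla_q(p(t)^TK_{q(t)}p(t))$ for almost every $t\in[0,1]$, with $q(0)=q_0$ and $p(0)=p_0$.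
   Context: Finite-dimensional unconstrained setting: the shape space $M$ is an open subset of $X=\mathbb{R}^n$, on which diffeomorphisms of $\mathbb{R}^d$ act with infinitesimal action $\xi_q$; $V$ is a reproducing kernel Hilbert space of vector fields on $\mathbb{R}^d$ with Riesz isometry $K_V:V^*\to V$, and $K_q=\xi_qK_V\xi_q^*$ is identified with an $n\times n$ symmetric positive semi-definite real matrix (the duality bracket being identified with the Euclidean product $p^Tw$). The function $g:M\to\mathbb{R}$ is of class $\mathcal{C}^1$ and $q\mapsto K_q$ is smooth enough (the infinitesimal action $\xi$ being of class $\mathcal{C}^2$). The reduced Hamiltonian is $h(q,p)=\frac{1}{2}p^TK_qp$, and the functional to be minimized over initial momenta is $\hat{J}_1(p_0)=\frac{1}{2}p_0^TK_{q_0}p_0+g(q(1))$, where $(q(\cdot),p(\cdot))$ is the solution of the Hamiltonian system $\dot q=\partial_ph(q,p)$, $\dot p=-\partial_qh(q,p)$ with $(q(0),p(0))=(q_0,p_0)$. The gradient is taken with respect to the canonical Euclidean inner product on $\mathbb{R}^n$. *)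

theory Defs
  imports "HOL-Analysis.Analysis"
begin

definition grad :: "('a::euclidean_space \<Rightarrow> real) \<Rightarrow> 'a \<Rightarrow> 'a" where
  "grad f x = (\<Sum>b\<in>Basis. frechet_derivative f (at x) b *\<^sub>R b)"

definition C1_on :: "'a::real_normed_vector set \<Rightarrow> ('a \<Rightarrow> 'b::real_normed_vector) \<Rightarrow> bool" where
  "C1_on S f \<longleftrightarrow> (\<exists>f'. (\<forall>x\<in>S. (f has_derivative blinfun_apply (f' x)) (at x)) \<and> continuous_on S f')"

definition C2_on :: "'a::real_normed_vector set \<Rightarrow> ('a \<Rightarrow> 'b::real_normed_vector) \<Rightarrow> bool" where
  "C2_on S f \<longleftrightarrow> (\<exists>f'. (\<forall>x\<in>S. (f has_derivative blinfun_apply (f' x)) (at x)) \<and> C1_on S f')"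

definition ham_sol ::
  "(real^('n::finite)) set \<Rightarrow> (real^'n \<Rightarrow> real^'n^'n) \<Rightarrow> real^'n \<Rightarrow> real^'n
     \<Rightarrow> (real \<Rightarrow> real^'n) \<Rightarrow> (real \<Rightarrow> real^'n) \<Rightarrow> bool" where
  "ham_sol M K q0 p0 q p \<longleftrightarrow> q 0 = q0 \<and> p 0 = p0 \<and>
     (\<forall>t\<in>{0..1}. q t \<in> M \<and>
        (q has_vector_derivative (K (q t) *v p t)) (at t within {0..1}) \<and>
        (p has_vector_derivative (- (1/2) *\<^sub>R grad (\<lambda>x. p t \<bullet> (K x *v p t)) (q t))) (at t within {0..1}))"

definition J1 ::
  "(real^('n::finite)) set \<Rightarrow> (real^'n \<Rightarrow> real^'n^'n) \<Rightarrow> (real^'n \<Rightarrow> real) \<Rightarrow> real^'n \<Rightarrow> real^'n \<Rightarrow> real" where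
  "J1 M K g q0 p0 = (1/2) * (p0 \<bullet> (K q0 *v p0)) +
     g (THE y. \<exists>q p. ham_sol M K q0 p0 q p \<and> y = q 1)"

end

theory Submission
  imports Defs
begin

text \<open>The Hamiltonian vector field \<open>F(q, p) = (K\<^sub>q p, -\<nabla>\<^sub>q(p\<^sup>T K\<^sub>q p) / 2)\<close> is \<open>C\<^sup>1\<close>, so its
  flow on \<open>[0, 1]\<close> is unique (Gronwall), exists for initial data near \<open>(q\<^sub>0, p\<^sub>0)\<close> with
  trajectories Lipschitz in the initial data (Picard iteration in a compact tube), and the
  difference \<open>\<delta>x\<close> of two trajectories solves the linearized equation up to \<open>o(|\<delta>x\<^sub>0|)\<close>.
  Instead of differentiating the flow, pair \<open>\<delta>x\<close> with the costate
  \<open>\<lambda>(t) = (z(1 - t), \<alpha>(1 - t))\<close>: the backward system for \<open>(z, \<alpha>)\<close> says that \<open>\<lambda>\<close> solves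
  the adjoint of the linearized equation, which needs the symmetry of \<open>K\<close>, of its derivative
  and of its second derivative (Schwarz). Hence \<open>\<lambda> \<bullet> \<delta>x\<close> is constant to first order; at
  \<open>t = 1\<close> it is \<open>\<nabla>g(q(1)) \<bullet> \<delta>q(1)\<close>, the first-order change of \<open>g(q(1))\<close>, and at \<open>t = 0\<close>
  it is \<open>\<alpha>(1) \<bullet> \<delta>p\<^sub>0\<close>. The quadratic term contributes \<open>K\<^sub>q\<^sub>0 p\<^sub>0\<close>.\<close>

lemma vector_derivative_bound_imp_lipschitz:
  fixes f :: "real \<Rightarrow> 'a::real_normed_vector"
  assumes "convex S"
    and der: "\<And>t. t \<in> S \<Longrightarrow> (f has_vector_derivative f' t) (at t within S)"
    and bound: "\<And>t. t \<in> S \<Longrightarrow> norm (f' t) \<le> B"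
    and "s \<in> S" "t \<in> S"
  shows "norm (f t - f s) \<le> B * \<bar>t - s\<bar>"
proof -
  have "norm (f t - f s) \<le> B * norm (t - s)"
  proof (rule differentiable_bound[OF \<open>convex S\<close> _ _ \<open>t \<in> S\<close> \<open>s \<in> S\<close>])
    fix u assume u: "u \<in> S"
    show "(f has_derivative (\<lambda>h. h *\<^sub>R f' u)) (at u within S)"
      using der[OF u] unfolding has_vector_derivative_def .
    show "onorm (\<lambda>h. h *\<^sub>R f' u) \<le> B"
    proof (rule onorm_le)
      fix h :: real
      have "norm (h *\<^sub>R f' u) = norm (f' u) * norm h" by simp
      also have "\<dots> \<le> B * norm h" using bound[OF u] by (rule mult_right_mono) simp
      finally show "norm (h *\<^sub>R f' u) \<le> B * norm h" .
    qed
  qed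
  then show ?thesis by simp
qed

lemma gronwall_lipschitz:
  fixes x y :: "real \<Rightarrow> 'a::real_inner"
  assumes L: "L \<ge> 0"
    and lip: "\<And>a b. a \<in> S \<Longrightarrow> b \<in> S \<Longrightarrow> norm (F a - F b) \<le> L * norm (a - b)"
    and xd: "\<And>t. t \<in> {0..1} \<Longrightarrow> (x has_vector_derivative F (x t)) (at t within {0..1})"
    and yd: "\<And>t. t \<in> {0..1} \<Longrightarrow> (y has_vector_derivative F (y t)) (at t within {0..1})"
    and xS: "\<And>t. t \<in> {0..1} \<Longrightarrow> x t \<in> S" and yS: "\<And>t. t \<in> {0..1} \<Longrightarrow> y t \<in> S"
    and t: "t \<in> {0..1}"
  shows "norm (x t - y t) \<le> norm (x 0 - y 0) * exp (L * t)"
proof -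
  define u where "u s = (x s - y s) \<bullet> (x s - y s)" for s
  define u' where "u' s = 2 * ((x s - y s) \<bullet> (F (x s) - F (y s)))" for s
  define w where "w s = exp (- (2 * L) * s) * u s" for s
  \<comment> \<open>The Lipschitz bound gives \<open>u' \<le> 2 L u\<close>, so \<open>w\<close> is nonincreasing.\<close>
  have ud: "(u has_real_derivative u' s) (at s within {0..1})" if s: "s \<in> {0..1}" for s
  proof -
    have "(u has_derivative (\<lambda>h. (x s - y s) \<bullet> (h *\<^sub>R (F (x s) - F (y s)))
        + (h *\<^sub>R (F (x s) - F (y s))) \<bullet> (x s - y s))) (at s within {0..1})"
      unfolding u_def using xd[OF s] yd[OF s] unfolding has_vector_derivative_def
      by (auto intro!: derivative_eq_intros simp: algebra_simps)
    then show ?thesis unfolding has_field_derivative_def u'_def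
      by (rule has_derivative_eq_rhs) (auto simp: inner_commute algebra_simps fun_eq_iff)
  qed
  have u'_le: "u' s \<le> 2 * L * u s" if s: "s \<in> {0..1}" for s
  proof -
    have "(x s - y s) \<bullet> (F (x s) - F (y s)) \<le> norm (x s - y s) * norm (F (x s) - F (y s))"
      by (rule norm_cauchy_schwarz)
    also have "\<dots> \<le> norm (x s - y s) * (L * norm (x s - y s))"
      by (rule mult_left_mono) (use lip xS yS s in auto)
    also have "\<dots> = L * u s"
      unfolding u_def by (simp add: power2_norm_eq_inner[symmetric] power2_eq_square)
    finally show ?thesis unfolding u'_def by simp
  qed
  have wd: "(w has_real_derivative exp (- (2 * L) * s) * (u' s - 2 * L * u s)) (at s)"
    if s: "0 < s" "s < t" for s
  proof -
    have s1: "s \<in> {0..1}" using s t by auto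
    have "(w has_real_derivative exp (- (2 * L) * s) * (u' s - 2 * L * u s)) (at s within {0..1})"
      unfolding w_def by (auto intro!: derivative_eq_intros ud[OF s1] simp: algebra_simps)
    then show ?thesis using s t at_within_Icc_at[of 0 s 1] by simp
  qed
  have "continuous_on {0..1} u"
    unfolding continuous_on_eq_continuous_within using ud DERIV_continuous by blast
  then have "continuous_on {0..t} u"
    by (rule continuous_on_subset) (use t in auto)
  then have "continuous_on {0..t} w"
    unfolding w_def by (intro continuous_intros)
  moreover have "\<exists>y. (w has_real_derivative y) (at s) \<and> y \<le> 0" if "0 < s" "s < t" for s
    using u'_le[of s] that t
    by (intro exI[of _ "exp (- (2 * L) * s) * (u' s - 2 * L * u s)"] conjI wd[OF that] mult_nonneg_nonpos) auto
  ultimately have "w t \<le> w 0"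
    using DERIV_nonpos_imp_decreasing_open[of 0 t w] t by auto
  then have "u t \<le> exp (2 * L * t) * u 0"
    unfolding w_def by (simp add: exp_minus field_simps)
  also have "\<dots> = (norm (x 0 - y 0) * exp (L * t))^2"
    unfolding u_def by (simp add: power2_norm_eq_inner[symmetric] power_mult_distrib
        exp_double[symmetric] mult.commute mult.left_commute)
  finally have "(norm (x t - y t))^2 \<le> (norm (x 0 - y 0) * exp (L * t))^2"
    unfolding u_def by (simp add: power2_norm_eq_inner[symmetric])
  then show ?thesis by (rule power2_le_imp_le) simp
qed

lemma exp_partial_sum_le:
  fixes x :: real
  assumes "x \<ge> 0"
  shows "(\<Sum>j<k. x^j / fact j) \<le> exp x"
proof -
  have "(\<lambda>n. x^n / fact n) sums exp x"
    using exp_converges[of x] by (simp add: divide_inverse_commute scaleR_conv_of_real)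
  then show ?thesis
    using sum_le_suminf[of "\<lambda>n. x^n / fact n"] assms by (simp add: sums_iff)
qed

lemma integral_power_from_0:
  fixes t :: real
  assumes "t \<ge> 0"
  shows "integral {0..t} (\<lambda>s. s^k) = t^Suc k / Suc k"
proof -
  have "((\<lambda>s. s^k) has_integral (t^Suc k / Suc k - 0^Suc k / Suc k)) {0..t}"
  proof (rule fundamental_theorem_of_calculus[OF assms])
    fix x :: real
    have "((\<lambda>s. s^Suc k / Suc k) has_real_derivative (real (Suc k) * x ^ (Suc k - Suc 0)) / Suc k) (at x)"
      by (intro DERIV_cdivide DERIV_pow)
    then have "((\<lambda>s. s^Suc k / Suc k) has_real_derivative x^k) (at x within {0..t})"
      by (simp add: has_field_derivative_at_within del: of_nat_Suc)
    then show "((\<lambda>s. s^Suc k / Suc k) has_vector_derivative x^k) (at x within {0..t})"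
      by (simp add: has_real_derivative_iff_has_vector_derivative)
  qed
  then show ?thesis by (simp add: integral_unique)
qed

lemma compact_thickening:
  fixes S U :: "'a::euclidean_space set"
  assumes "compact S" "open U" "S \<subseteq> U"
  obtains e W where "e > 0" "compact W" "W \<subseteq> U" "\<And>x. x \<in> S \<Longrightarrow> cball x e \<subseteq> W"
proof -
  obtain e where e: "e > 0" "(\<Union>x\<in>S. cball x e) \<subseteq> U"
    by (rule compact_subset_open_imp_cball_epsilon_subset[OF assms])
  define W where "W = {x + y |x y. x \<in> S \<and> y \<in> cball 0 e}"
  have "compact W" unfolding W_def by (rule compact_sums) (use assms in auto)
  moreover have cball_W: "cball x e \<subseteq> W" if "x \<in> S" for x
  proof
    fix z assume "z \<in> cball x e"
    then have "z - x \<in> cball 0 e" by (simp add: dist_norm norm_minus_commute)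
    then show "z \<in> W" unfolding W_def using that by force
  qed
  moreover have "W \<subseteq> U"
  proof
    fix z assume "z \<in> W"
    then obtain x y where "z = x + y" "x \<in> S" "y \<in> cball 0 e" unfolding W_def by auto
    then have "z \<in> cball x e" by (simp add: dist_norm)
    then show "z \<in> U" using e \<open>x \<in> S\<close> by blast
  qed
  ultimately show ?thesis using that e(1) by blast
qed

lemma norm_bounded_on_compact:
  assumes "continuous_on W f" "compact W"
  obtains B where "B \<ge> 0" "\<And>x. x \<in> W \<Longrightarrow> norm (f x) \<le> B"
proof -
  obtain B0 where "\<And>x. x \<in> W \<Longrightarrow> norm (f x) \<le> B0"
    using compact_imp_bounded[OF compact_continuous_image[OF assms]] bounded_iff
    by (metis image_eqI)
  then show ?thesis using that[of "max B0 0"] by force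
qed

lemma has_derivative_compose_lipschitz:
  fixes \<Phi> :: "'a::real_normed_vector \<Rightarrow> 'b::real_normed_vector" and G :: "'b \<Rightarrow> 'c::real_normed_vector"
  assumes G: "(G has_derivative DG) (at (\<Phi> x0))"
    and DG: "((\<lambda>y. DG (\<Phi> y)) has_derivative \<Lambda>) (at x0)"
    and lip: "\<delta> > 0" "C \<ge> 0" "\<And>y. norm (y - x0) < \<delta> \<Longrightarrow> norm (\<Phi> y - \<Phi> x0) \<le> C * norm (y - x0)"
  shows "((\<lambda>y. G (\<Phi> y)) has_derivative \<Lambda>) (at x0)"
  unfolding has_derivative_at_alt
proof (intro conjI allI impI)
  show "bounded_linear \<Lambda>" using DG by (rule has_derivative_bounded_linear)
  fix e :: real assume e: "e > 0"
  obtain d1 where d1: "d1 > 0" "\<And>y. norm (y - x0) < d1 \<Longrightarrow>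
      norm (DG (\<Phi> y) - DG (\<Phi> x0) - \<Lambda> (y - x0)) \<le> e / 2 * norm (y - x0)"
    using DG[unfolded has_derivative_at_alt] e by (meson half_gt_zero)
  have "e / (2 * (C + 1)) > 0" using e lip(2) by simp
  then obtain d2 where d2: "d2 > 0" "\<And>z. norm (z - \<Phi> x0) < d2 \<Longrightarrow>
      norm (G z - G (\<Phi> x0) - DG (z - \<Phi> x0)) \<le> e / (2 * (C + 1)) * norm (z - \<Phi> x0)"
    using G[unfolded has_derivative_at_alt] by meson
  have DG_diff: "DG (\<Phi> y - \<Phi> x0) = DG (\<Phi> y) - DG (\<Phi> x0)" for y
    using linear_diff[OF has_derivative_linear[OF G]] .
  show "\<exists>d>0. \<forall>y. norm (y - x0) < d \<longrightarrow> norm (G (\<Phi> y) - G (\<Phi> x0) - \<Lambda> (y - x0)) \<le> e * norm (y - x0)"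
  proof (intro exI[of _ "min \<delta> (min d1 (d2 / (C + 1)))"] conjI allI impI)
    show "min \<delta> (min d1 (d2 / (C + 1))) > 0" using lip d1 d2 by simp
    fix y assume y: "norm (y - x0) < min \<delta> (min d1 (d2 / (C + 1)))"
    have \<Phi>y: "norm (\<Phi> y - \<Phi> x0) \<le> C * norm (y - x0)" using lip(3) y by simp
    also have "\<dots> \<le> (C + 1) * norm (y - x0)" by (simp add: mult_right_mono)
    finally have "norm (\<Phi> y - \<Phi> x0) < d2" using y lip(2) by (auto simp: field_simps)
    then have "norm (G (\<Phi> y) - G (\<Phi> x0) - DG (\<Phi> y - \<Phi> x0)) \<le> e / (2 * (C + 1)) * norm (\<Phi> y - \<Phi> x0)"
      by (rule d2(2))
    also have "\<dots> \<le> e / (2 * (C + 1)) * (C * norm (y - x0))"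
      using \<Phi>y e lip(2) by (intro mult_left_mono) auto
    also have "\<dots> = (e / (2 * (C + 1)) * C) * norm (y - x0)" by simp
    also have "\<dots> \<le> e / 2 * norm (y - x0)"
      using e lip(2) by (intro mult_right_mono) (simp_all add: field_simps)
    finally show "norm (G (\<Phi> y) - G (\<Phi> x0) - \<Lambda> (y - x0)) \<le> e * norm (y - x0)"
      using d1(2)[of y] y norm_triangle_ineq[of "G (\<Phi> y) - G (\<Phi> x0) - DG (\<Phi> y - \<Phi> x0)"
          "DG (\<Phi> y) - DG (\<Phi> x0) - \<Lambda> (y - x0)"]
      unfolding DG_diff by (simp add: algebra_simps)
  qed
qed

section \<open>Autonomous equations on \<open>[0, 1]\<close>\<close>

definition ode_solution :: "'a::real_normed_vector set \<Rightarrow> ('a \<Rightarrow> 'a) \<Rightarrow> 'a \<Rightarrow> (real \<Rightarrow> 'a) \<Rightarrow> bool"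
  where "ode_solution U F x0 x \<longleftrightarrow> x 0 = x0 \<and>
    (\<forall>t\<in>{0..1}. x t \<in> U \<and> (x has_vector_derivative F (x t)) (at t within {0..1}))"

definition flow_end :: "'a::real_normed_vector set \<Rightarrow> ('a \<Rightarrow> 'a) \<Rightarrow> 'a \<Rightarrow> 'a"
  where "flow_end U F y0 = (THE y1. \<exists>y. ode_solution U F y0 y \<and> y1 = y 1)"

lemma ode_solution_continuous: "ode_solution U F x0 x \<Longrightarrow> continuous_on {0..1} x"
  unfolding ode_solution_def by (rule continuous_on_vector_derivative) auto

lemma ode_solution_integral_equation:
  fixes x :: "real \<Rightarrow> 'a::banach"
  assumes x: "ode_solution U F x0 x" and t: "t \<in> {0..1}"
  shows "x t = x0 + integral {0..t} (\<lambda>s. F (x s))"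
proof -
  have "((\<lambda>s. F (x s)) has_integral (x t - x 0)) {0..t}"
  proof (rule fundamental_theorem_of_calculus)
    show "0 \<le> t" using t by auto
    fix s assume "s \<in> {0..t}"
    then have "(x has_vector_derivative F (x s)) (at s within {0..1})"
      using x t unfolding ode_solution_def by auto
    then show "(x has_vector_derivative F (x s)) (at s within {0..t})"
      by (rule has_vector_derivative_within_subset) (use t in auto)
  qed
  then show ?thesis using x unfolding ode_solution_def by (simp add: integral_unique)
qed

locale C1_field =
  fixes U :: "'a::euclidean_space set" and F :: "'a \<Rightarrow> 'a" and DF :: "'a \<Rightarrow> 'a \<Rightarrow> 'a"
  assumes open_U: "open U"
    and F_has_derivative: "\<And>x. x \<in> U \<Longrightarrow> (F has_derivative DF x) (at x)"
    and continuous_DF: "continuous_on (U \<times> UNIV) (\<lambda>z. DF (fst z) (snd z))"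
begin

lemma linear_DF: "x \<in> U \<Longrightarrow> linear (DF x)"
  using F_has_derivative has_derivative_linear by blast

lemma continuous_on_F: "continuous_on U F"
  using F_has_derivative has_derivative_continuous continuous_at_imp_continuous_on by blast

lemma DF_scaleR_unit:
  assumes "x \<in> U" "h \<noteq> 0"
  shows "DF x h = norm h *\<^sub>R DF x (h /\<^sub>R norm h)"
  using linear_cmul[OF linear_DF[OF assms(1)], of "norm h" "h /\<^sub>R norm h"] assms(2) by simp

lemma DF_bounded_on_compact:
  assumes "compact S" "S \<subseteq> U"
  obtains B where "B \<ge> 0" "\<And>x h. x \<in> S \<Longrightarrow> norm (DF x h) \<le> B * norm h"
proof -
  have "continuous_on (S \<times> cball 0 1) (\<lambda>z. DF (fst z) (snd z))"
    by (rule continuous_on_subset[OF continuous_DF]) (use assms in auto)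
  moreover have "compact (S \<times> cball (0::'a) 1)" using assms by (simp add: compact_Times)
  ultimately obtain B where
    B: "B \<ge> 0" "\<And>z. z \<in> S \<times> cball 0 1 \<Longrightarrow> norm (DF (fst z) (snd z)) \<le> B"
    using norm_bounded_on_compact by blast
  have "norm (DF x h) \<le> B * norm h" if x: "x \<in> S" for x h
  proof (cases "h = 0")
    case True
    then show ?thesis using linear_0[OF linear_DF] x assms by auto
  next
    case False
    have "norm (DF x (h /\<^sub>R norm h)) \<le> B" using B(2)[of "(x, h /\<^sub>R norm h)"] x False by simp
    moreover have "DF x h = norm h *\<^sub>R DF x (h /\<^sub>R norm h)"
      using DF_scaleR_unit[of x h] x assms False by auto
    ultimately show ?thesis by (simp add: mult.commute[of B] mult_left_mono)
  qed
  with B(1) that show ?thesis by blast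
qed

lemma lipschitz_on_compact:
  assumes S: "compact S" "S \<subseteq> U"
  obtains L where "L \<ge> 0" "\<And>a b. a \<in> S \<Longrightarrow> b \<in> S \<Longrightarrow> norm (F a - F b) \<le> L * norm (a - b)"
proof -
  obtain e W where e: "e > 0" "compact W" "W \<subseteq> U" "\<And>x. x \<in> S \<Longrightarrow> cball x e \<subseteq> W"
    by (rule compact_thickening[OF S(1) open_U S(2)]) blast
  obtain B where B: "B \<ge> 0" "\<And>x h. x \<in> W \<Longrightarrow> norm (DF x h) \<le> B * norm h"
    using DF_bounded_on_compact[OF e(2,3)] by blast
  obtain M where M: "M \<ge> 0" "\<And>x. x \<in> S \<Longrightarrow> norm (F x) \<le> M"
    using norm_bounded_on_compact[OF continuous_on_subset[OF continuous_on_F S(2)] S(1)] by blast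
  define L where "L = B + 2 * M / e"
  \<comment> \<open>Near points are handled by the mean value theorem inside a ball in \<open>W\<close>, far points by
    the bound on \<open>F\<close>.\<close>
  have "norm (F a - F b) \<le> L * norm (a - b)" if ab: "a \<in> S" "b \<in> S" for a b
  proof (cases "norm (a - b) \<le> e")
    case True
    have "norm (F b - F a) \<le> B * norm (b - a)"
    proof (rule differentiable_bound[where S="cball a e" and f'=DF])
      fix z assume "z \<in> cball a e"
      then have "z \<in> W" using e(4) ab by blast
      then show "(F has_derivative DF z) (at z within cball a e)" "onorm (DF z) \<le> B"
        using F_has_derivative e(3) B has_derivative_at_withinI by (blast, intro onorm_le) auto
    qed (use True e in \<open>auto simp: dist_norm\<close>)
    moreover have "B * norm (a - b) \<le> L * norm (a - b)"
      unfolding L_def using M e by (intro mult_right_mono) auto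
    ultimately show ?thesis by (simp add: norm_minus_commute)
  next
    case False
    have "norm (F a - F b) \<le> 2 * M"
      using M(2)[OF ab(1)] M(2)[OF ab(2)] norm_triangle_ineq4[of "F a" "F b"] by linarith
    also have "\<dots> \<le> 2 * M / e * norm (a - b)"
      using False e M by (simp add: field_simps mult_left_mono)
    also have "\<dots> \<le> L * norm (a - b)" unfolding L_def using B by (intro mult_right_mono) auto
    finally show ?thesis .
  qed
  moreover have "L \<ge> 0" unfolding L_def using B M e by auto
  ultimately show ?thesis using that by blast
qed

lemma ode_solution_unique:
  assumes x: "ode_solution U F x0 x" and y: "ode_solution U F x0 y" and t: "t \<in> {0..1}"
  shows "x t = y t"
proof -
  define S where "S = x ` {0..1} \<union> y ` {0..1}"
  have "compact S" unfolding S_def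
    using compact_continuous_image[OF ode_solution_continuous[OF x]]
      compact_continuous_image[OF ode_solution_continuous[OF y]] by auto
  moreover have "S \<subseteq> U" using x y unfolding S_def ode_solution_def by auto
  ultimately obtain L where
    L: "L \<ge> 0" "\<And>a b. a \<in> S \<Longrightarrow> b \<in> S \<Longrightarrow> norm (F a - F b) \<le> L * norm (a - b)"
    using lipschitz_on_compact by blast
  have "x s \<in> S" "y s \<in> S" if "s \<in> {0..1}" for s
    using that unfolding S_def by auto
  then have "norm (x t - y t) \<le> norm (x 0 - y 0) * exp (L * t)"
    using gronwall_lipschitz[OF L, where x=x and y=y] x y t unfolding ode_solution_def by blast
  then show ?thesis using x y unfolding ode_solution_def by simp
qed

definition picard :: "'a \<Rightarrow> (real \<Rightarrow> 'a) \<Rightarrow> real \<Rightarrow> 'a"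
  where "picard \<xi> f t = \<xi> + integral {0..t} (\<lambda>s. F (f s))"

lemma picard_0 [simp]: "picard \<xi> f 0 = \<xi>"
  unfolding picard_def by simp

lemma continuous_on_F_comp:
  assumes "continuous_on {0..1} f" "\<And>s. s \<in> {0..1} \<Longrightarrow> f s \<in> U"
  shows "continuous_on {0..1} (\<lambda>s. F (f s))"
  by (rule continuous_on_compose2[OF continuous_on_F assms(1)]) (use assms(2) in auto)

lemma picard_has_vector_derivative:
  assumes "continuous_on {0..1} f" "\<And>s. s \<in> {0..1} \<Longrightarrow> f s \<in> U" "t \<in> {0..1}"
  shows "(picard \<xi> f has_vector_derivative F (f t)) (at t within {0..1})"
  unfolding picard_def
  using integral_has_vector_derivative[OF continuous_on_F_comp[OF assms(1,2)] assms(3)]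
  by (auto intro!: derivative_eq_intros)

lemma continuous_on_picard:
  assumes "continuous_on {0..1} f" "\<And>s. s \<in> {0..1} \<Longrightarrow> f s \<in> U"
  shows "continuous_on {0..1} (picard \<xi> f)"
  by (rule continuous_on_vector_derivative) (use picard_has_vector_derivative[OF assms] in auto)

lemma picard_lipschitz:
  assumes "continuous_on {0..1} f" "\<And>s. s \<in> {0..1} \<Longrightarrow> f s \<in> U"
    and "\<And>s. s \<in> {0..1} \<Longrightarrow> norm (F (f s)) \<le> B" and "s \<in> {0..1}" "t \<in> {0..1}"
  shows "norm (picard \<xi> f t - picard \<xi> f s) \<le> B * \<bar>t - s\<bar>"
  using picard_has_vector_derivative[OF assms(1,2)] assms(3-5)
  by (intro vector_derivative_bound_imp_lipschitz[where S="{0..1}"]) auto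

lemma norm_picard_diff_le:
  assumes f: "continuous_on {0..1} f" "\<And>s. s \<in> {0..1} \<Longrightarrow> f s \<in> W"
    and g: "continuous_on {0..1} g" "\<And>s. s \<in> {0..1} \<Longrightarrow> g s \<in> W"
    and W: "W \<subseteq> U"
    and lip: "\<And>a b. a \<in> W \<Longrightarrow> b \<in> W \<Longrightarrow> norm (F a - F b) \<le> L * norm (a - b)" "L \<ge> 0"
    and h: "\<And>s. s \<in> {0..1} \<Longrightarrow> norm (f s - g s) \<le> h s" "h integrable_on {0..t}"
    and t: "t \<in> {0..1}"
  shows "norm (picard \<xi> f t - picard \<xi> g t) \<le> L * integral {0..t} h"
proof -
  have sub: "{0..t} \<subseteq> {0..1}" using t by auto
  have "continuous_on {0..1} (\<lambda>s. F (f s))" "continuous_on {0..1} (\<lambda>s. F (g s))"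
    using continuous_on_F_comp[OF f(1)] continuous_on_F_comp[OF g(1)] f(2) g(2) W by blast+
  then have int_f: "(\<lambda>s. F (f s)) integrable_on {0..t}" and int_g: "(\<lambda>s. F (g s)) integrable_on {0..t}"
    by (auto intro!: integrable_continuous_interval dest: continuous_on_subset[OF _ sub])
  have "picard \<xi> f t - picard \<xi> g t = integral {0..t} (\<lambda>s. F (f s) - F (g s))"
    unfolding picard_def using integral_diff[OF int_f int_g] by simp
  also have "norm \<dots> \<le> integral {0..t} (\<lambda>s. L * h s)"
  proof (rule integral_norm_bound_integral)
    show "(\<lambda>s. F (f s) - F (g s)) integrable_on {0..t}" using int_f int_g by (rule integrable_diff)
    show "(\<lambda>s. L * h s) integrable_on {0..t}" using integrable_cmul[OF h(2), of L] by simp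
    fix s assume "s \<in> {0..t}"
    then have s: "s \<in> {0..1}" using sub by auto
    have "norm (F (f s) - F (g s)) \<le> L * norm (f s - g s)" using lip f(2) g(2) s by auto
    also have "\<dots> \<le> L * h s" using h(1)[OF s] lip(2) by (simp add: mult_left_mono)
    finally show "norm (F (f s) - F (g s)) \<le> L * h s" .
  qed
  also have "\<dots> = L * integral {0..t} h" by simp
  finally show ?thesis .
qed

end

section \<open>Solutions from nearby initial values\<close>

locale picard_tube = C1_field +
  fixes x0 :: 'a and xs :: "real \<Rightarrow> 'a" and W :: "'a set" and L B :: real and y0 :: 'a
  assumes solution: "ode_solution U F x0 xs"
    and W_subset: "W \<subseteq> U"
    and lipschitz: "\<And>a b. a \<in> W \<Longrightarrow> b \<in> W \<Longrightarrow> norm (F a - F b) \<le> L * norm (a - b)"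
    and L_nonneg: "L \<ge> 0"
    and bound: "\<And>x. x \<in> W \<Longrightarrow> norm (F x) \<le> B"
    and tube: "\<And>t x. t \<in> {0..1} \<Longrightarrow> norm (x - xs t) \<le> norm (y0 - x0) * exp L \<Longrightarrow> x \<in> W"
begin

definition iterate :: "nat \<Rightarrow> real \<Rightarrow> 'a"
  where "iterate k = (picard y0 ^^ k) xs"

lemma iterate_0: "iterate 0 = xs" and iterate_Suc: "iterate (Suc k) = picard y0 (iterate k)"
  unfolding iterate_def by simp_all

lemma partial_exp_bound:
  assumes t: "t \<in> {0..1}"
  shows "norm (y0 - x0) * (\<Sum>j<k. (L * t)^j / fact j) \<le> norm (y0 - x0) * exp L"
proof -
  have "(\<Sum>j<k. (L * t)^j / fact j) \<le> exp (L * t)"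
    by (rule exp_partial_sum_le) (use L_nonneg t in auto)
  also have "\<dots> \<le> exp L" using L_nonneg t by (simp add: mult_left_le)
  finally show ?thesis by (simp add: mult_left_mono)
qed

lemma in_tube_if_near:
  assumes t: "t \<in> {0..1}" and near: "norm (z - xs t) \<le> norm (y0 - x0) * (\<Sum>j<k. (L * t)^j / fact j)"
  shows "z \<in> W"
  using tube[OF t order_trans[OF near partial_exp_bound[OF t]]] .

lemma iterate_increment_step:
  assumes cont: "continuous_on {0..1} (iterate k)" "continuous_on {0..1} (iterate (Suc k))"
    and in_W: "\<And>s. s \<in> {0..1} \<Longrightarrow> iterate k s \<in> W" "\<And>s. s \<in> {0..1} \<Longrightarrow> iterate (Suc k) s \<in> W"
    and step: "\<And>s. s \<in> {0..1} \<Longrightarrow>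
      norm (iterate (Suc k) s - iterate k s) \<le> norm (y0 - x0) * (L * s)^k / fact k"
    and t: "t \<in> {0..1}"
  shows "norm (iterate (Suc (Suc k)) t - iterate (Suc k) t) \<le> norm (y0 - x0) * (L * t)^Suc k / fact (Suc k)"
proof -
  define c where "c = norm (y0 - x0) * L^k / fact k"
  have "iterate (Suc (Suc k)) t - iterate (Suc k) t = picard y0 (iterate (Suc k)) t - picard y0 (iterate k) t"
    by (simp only: iterate_Suc)
  also have "norm \<dots> \<le> L * integral {0..t} (\<lambda>s. c * s^k)"
  proof (rule norm_picard_diff_le[OF cont(2) in_W(2) cont(1) in_W(1) W_subset lipschitz L_nonneg _ _ t])
    show "norm (iterate (Suc k) s - iterate k s) \<le> c * s^k" if "s \<in> {0..1}" for s
      using step[OF that] unfolding c_def by (simp add: power_mult_distrib)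
    show "(\<lambda>s. c * s^k) integrable_on {0..t}"
      by (intro integrable_continuous_interval continuous_intros)
  qed
  also have "\<dots> = L * (c * (t^Suc k / Suc k))"
    using integral_power_from_0[of t k] t by simp
  also have "\<dots> = norm (y0 - x0) * (L * t)^Suc k / fact (Suc k)"
    unfolding c_def by (simp add: power_mult_distrib field_simps)
  finally show ?thesis .
qed

lemma iterate_estimates:
  "continuous_on {0..1} (iterate k) \<and>
   (\<forall>t\<in>{0..1}. norm (iterate k t - xs t) \<le> norm (y0 - x0) * (\<Sum>j<k. (L * t)^j / fact j)) \<and>
   (\<forall>t\<in>{0..1}. norm (iterate (Suc k) t - iterate k t) \<le> norm (y0 - x0) * (L * t)^k / fact k)"
proof (induction k)
  case 0
  have "picard y0 xs t - xs t = y0 - x0" if "t \<in> {0..1}" for t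
    using ode_solution_integral_equation[OF solution that] unfolding picard_def by simp
  then show ?case using ode_solution_continuous[OF solution] by (simp add: iterate_Suc iterate_0)
next
  case (Suc k)
  have cont: "continuous_on {0..1} (iterate k)"
    and near: "\<And>t. t \<in> {0..1} \<Longrightarrow> norm (iterate k t - xs t) \<le> norm (y0 - x0) * (\<Sum>j<k. (L * t)^j / fact j)"
    and step: "\<And>t. t \<in> {0..1} \<Longrightarrow> norm (iterate (Suc k) t - iterate k t) \<le> norm (y0 - x0) * (L * t)^k / fact k"
    using Suc.IH by auto
  have in_W: "iterate k s \<in> W" if "s \<in> {0..1}" for s
    using in_tube_if_near[OF that near[OF that]] .
  have cont': "continuous_on {0..1} (iterate (Suc k))"
    unfolding iterate_Suc using continuous_on_picard[OF cont] in_W W_subset by blast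
  have near': "norm (iterate (Suc k) t - xs t) \<le> norm (y0 - x0) * (\<Sum>j<Suc k. (L * t)^j / fact j)"
    if t: "t \<in> {0..1}" for t
  proof -
    have "norm (iterate (Suc k) t - xs t) \<le> norm (iterate (Suc k) t - iterate k t) + norm (iterate k t - xs t)"
      by (rule norm_diff_triangle_le[where y="iterate k t"]) simp_all
    also have "\<dots> \<le> norm (y0 - x0) * (\<Sum>j<Suc k. (L * t)^j / fact j)"
      using add_mono[OF step[OF t] near[OF t]] by (simp add: algebra_simps)
    finally show ?thesis .
  qed
  have in_W': "iterate (Suc k) s \<in> W" if "s \<in> {0..1}" for s
    using in_tube_if_near[OF that near'[OF that]] .
  show ?case using cont' near' iterate_increment_step[OF cont cont' in_W in_W' step] by blast
qed

lemma continuous_on_iterate: "continuous_on {0..1} (iterate k)"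
  using iterate_estimates by blast

lemma iterate_in_W: "t \<in> {0..1} \<Longrightarrow> iterate k t \<in> W"
  using iterate_estimates in_tube_if_near by blast

lemma iterate_increment_le:
  assumes t: "t \<in> {0..1}"
  shows "norm (iterate (Suc k) t - iterate k t) \<le> norm (y0 - x0) * L^k / fact k"
proof -
  have "(L * t)^k \<le> L^k"
    using L_nonneg t by (intro power_mono) (auto simp: mult_left_le)
  then have "norm (y0 - x0) * (L * t)^k / fact k \<le> norm (y0 - x0) * L^k / fact k"
    by (intro divide_right_mono mult_left_mono) auto
  then show ?thesis using iterate_estimates t by (meson order_trans)
qed

definition picard_limit :: "real \<Rightarrow> 'a"
  where "picard_limit t = xs t + (\<Sum>k. iterate (Suc k) t - iterate k t)"

definition tail_bound :: "nat \<Rightarrow> real"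
  where "tail_bound k = norm (y0 - x0) * exp L - (\<Sum>j<k. norm (y0 - x0) * L^j / fact j)"

lemma majorant_sums: "(\<lambda>j. norm (y0 - x0) * L^j / fact j) sums (norm (y0 - x0) * exp L)"
  using sums_mult[OF exp_converges[of L], of "norm (y0 - x0)"]
  by (simp add: divide_inverse_commute scaleR_conv_of_real mult.assoc mult.left_commute)

lemma tail_bound_tendsto_0: "tail_bound \<longlonglongrightarrow> 0"
  using tendsto_diff[OF tendsto_const[of "norm (y0 - x0) * exp L"] majorant_sums[unfolded sums_def]]
  unfolding tail_bound_def by simp

lemma picard_limit_minus_iterate:
  assumes t: "t \<in> {0..1}"
  shows "norm (picard_limit t - iterate k t) \<le> tail_bound k"
proof -
  define D where "D j = iterate (Suc j) t - iterate j t" for j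
  have majorant: "summable (\<lambda>j. norm (y0 - x0) * L^j / fact j)"
    using majorant_sums by (rule sums_summable)
  have "summable D"
    by (rule summable_comparison_test[OF _ majorant]) (use iterate_increment_le t in \<open>auto simp: D_def\<close>)
  have "(\<Sum>j<k. D j) = iterate k t - xs t"
    unfolding D_def using sum_lessThan_telescope[of "\<lambda>j. iterate j t" k] by (simp add: iterate_0)
  then have "picard_limit t - iterate k t = (\<Sum>j. D (j + k))"
    using suminf_split_initial_segment[OF \<open>summable D\<close>, of k] unfolding picard_limit_def D_def by simp
  also have "norm \<dots> \<le> (\<Sum>j. norm (y0 - x0) * L^(j + k) / fact (j + k))"
    by (rule norm_suminf_le)
       (use iterate_increment_le t summable_ignore_initial_segment[OF majorant] in \<open>auto simp: D_def\<close>)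
  also have "\<dots> = tail_bound k"
    unfolding tail_bound_def using suminf_split_initial_segment[OF majorant, of k] sums_unique[OF majorant_sums]
    by simp
  finally show ?thesis .
qed

lemma iterate_tendsto_picard_limit:
  assumes "t \<in> {0..1}"
  shows "(\<lambda>k. iterate k t) \<longlonglongrightarrow> picard_limit t"
proof -
  have "(\<lambda>k. iterate k t - picard_limit t) \<longlonglongrightarrow> 0"
    by (rule Lim_null_comparison[OF _ tail_bound_tendsto_0])
       (use picard_limit_minus_iterate[OF assms] in \<open>auto simp: norm_minus_commute\<close>)
  then show ?thesis by (simp add: LIM_zero_iff)
qed

lemma picard_limit_near:
  assumes t: "t \<in> {0..1}"
  shows "norm (picard_limit t - xs t) \<le> norm (y0 - x0) * exp L"
proof (rule LIMSEQ_le_const2)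
  show "(\<lambda>k. norm (iterate k t - xs t)) \<longlonglongrightarrow> norm (picard_limit t - xs t)"
    by (intro tendsto_norm tendsto_diff iterate_tendsto_picard_limit[OF t] tendsto_const)
  show "\<exists>N. \<forall>k\<ge>N. norm (iterate k t - xs t) \<le> norm (y0 - x0) * exp L"
    using iterate_estimates partial_exp_bound t by (meson order_trans)
qed

lemma picard_limit_in_W: "t \<in> {0..1} \<Longrightarrow> picard_limit t \<in> W"
  using tube picard_limit_near by blast

lemma B_nonneg: "B \<ge> 0"
  using bound[OF tube[of 0 "xs 0"]] by (simp add: order_trans[OF norm_ge_zero])

lemma continuous_on_picard_limit: "continuous_on {0..1} picard_limit"
proof (rule lipschitz_on_continuous_on[OF lipschitz_onI[OF _ B_nonneg]])
  fix s t :: real assume st: "s \<in> {0..1}" "t \<in> {0..1}"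
  show "dist (picard_limit s) (picard_limit t) \<le> B * dist s t"
  proof (rule LIMSEQ_le_const2)
    show "(\<lambda>k. dist (iterate (Suc k) s) (iterate (Suc k) t)) \<longlonglongrightarrow> dist (picard_limit s) (picard_limit t)"
      by (intro tendsto_dist LIMSEQ_Suc iterate_tendsto_picard_limit st)
    have "dist (iterate (Suc k) s) (iterate (Suc k) t) \<le> B * dist s t" for k
      unfolding iterate_Suc dist_norm
      using picard_lipschitz[OF continuous_on_iterate _ _ st(2,1), where \<xi>=y0 and B=B] iterate_in_W W_subset bound
      by (auto simp: dist_real_def)
    then show "\<exists>N. \<forall>k\<ge>N. dist (iterate (Suc k) s) (iterate (Suc k) t) \<le> B * dist s t" by blast
  qed
qed

lemma picard_limit_fixed_point:
  assumes t: "t \<in> {0..1}"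
  shows "picard y0 picard_limit t = picard_limit t"
proof (rule LIMSEQ_unique[OF _ LIMSEQ_Suc[OF iterate_tendsto_picard_limit[OF t]]])
  have "norm (iterate (Suc k) t - picard y0 picard_limit t) \<le> L * tail_bound k" for k
  proof -
    have "norm (picard y0 picard_limit t - picard y0 (iterate k) t) \<le> L * integral {0..t} (\<lambda>s. tail_bound k)"
      by (rule norm_picard_diff_le[OF continuous_on_picard_limit picard_limit_in_W
            continuous_on_iterate iterate_in_W W_subset lipschitz L_nonneg picard_limit_minus_iterate _ t])
         auto
    also have "\<dots> \<le> L * tail_bound k"
      using t L_nonneg order_trans[OF norm_ge_zero picard_limit_minus_iterate[OF t]]
      by (auto intro!: mult_left_mono simp: mult_left_le_one_le)
    finally show ?thesis by (simp add: iterate_Suc norm_minus_commute)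
  qed
  then have "(\<lambda>k. iterate (Suc k) t - picard y0 picard_limit t) \<longlonglongrightarrow> 0"
    by (intro Lim_null_comparison[OF _ tendsto_mult_right_zero[OF tail_bound_tendsto_0, where c=L]]) auto
  then show "(\<lambda>k. iterate (Suc k) t) \<longlonglongrightarrow> picard y0 picard_limit t"
    by (simp add: LIM_zero_iff)
qed

theorem picard_limit_solution: "ode_solution U F y0 picard_limit"
  unfolding ode_solution_def
proof (intro conjI ballI)
  show "picard_limit 0 = y0" using picard_limit_fixed_point[of 0] by simp
  have in_U: "picard_limit s \<in> U" if "s \<in> {0..1}" for s
    using picard_limit_in_W[OF that] W_subset by blast
  fix t :: real assume t: "t \<in> {0..1}"
  show "picard_limit t \<in> U" using in_U[OF t] .
  show "(picard_limit has_vector_derivative F (picard_limit t)) (at t within {0..1})"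
    by (rule has_vector_derivative_transform[OF t _ picard_has_vector_derivative[where \<xi>=y0, OF
          continuous_on_picard_limit in_U t]]) (simp add: picard_limit_fixed_point)
qed

end

context C1_field
begin

theorem ode_solution_exists_near:
  assumes xs: "ode_solution U F x0 xs"
  obtains \<delta> C where "\<delta> > 0" "C \<ge> 0"
    "\<And>y0. norm (y0 - x0) < \<delta> \<Longrightarrow>
       \<exists>y. ode_solution U F y0 y \<and> (\<forall>t\<in>{0..1}. norm (y t - xs t) \<le> C * norm (y0 - x0))"
proof -
  have "compact (xs ` {0..1})" "xs ` {0..1} \<subseteq> U"
    using compact_continuous_image[OF ode_solution_continuous[OF xs]] xs
    unfolding ode_solution_def by auto
  then obtain e W where e: "e > 0" "compact W" "W \<subseteq> U" "\<And>x. x \<in> xs ` {0..1} \<Longrightarrow> cball x e \<subseteq> W"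
    using compact_thickening open_U by metis
  obtain L where L: "L \<ge> 0" "\<And>a b. a \<in> W \<Longrightarrow> b \<in> W \<Longrightarrow> norm (F a - F b) \<le> L * norm (a - b)"
    using lipschitz_on_compact[OF e(2,3)] by blast
  obtain B where B: "\<And>x. x \<in> W \<Longrightarrow> norm (F x) \<le> B"
    using norm_bounded_on_compact[OF continuous_on_subset[OF continuous_on_F e(3)] e(2)] by blast
  have "\<exists>y. ode_solution U F y0 y \<and> (\<forall>t\<in>{0..1}. norm (y t - xs t) \<le> exp L * norm (y0 - x0))"
    if y0: "norm (y0 - x0) < e / exp L" for y0
  proof -
    interpret picard_tube U F DF x0 xs W L B y0
    proof
      fix t x assume t: "t \<in> {0..1}" and "norm (x - xs t) \<le> norm (y0 - x0) * exp L"
      then have "x \<in> cball (xs t) e"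
        using y0 by (simp add: dist_norm norm_minus_commute field_simps)
      then show "x \<in> W" using e(4) t by blast
    qed (use xs e L B in auto)
    show ?thesis using picard_limit_solution picard_limit_near by (auto simp: mult.commute)
  qed
  then show ?thesis using that[of "e / exp L" "exp L"] e(1) by auto
qed

section \<open>Adjoint sensitivity of the endpoint\<close>

lemma DF_uniformly_continuous_on_compact:
  assumes W: "compact W" "W \<subseteq> U" and \<epsilon>: "\<epsilon> > 0"
  obtains \<eta> where "\<eta> > 0" "\<And>u x. u \<in> W \<Longrightarrow> x \<in> W \<Longrightarrow> dist u x < \<eta> \<Longrightarrow> onorm (DF u - DF x) \<le> \<epsilon>"
proof -
  have "uniformly_continuous_on (W \<times> cball 0 1) (\<lambda>z. DF (fst z) (snd z))"
    by (rule compact_uniformly_continuous[OF continuous_on_subset[OF continuous_DF]])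
       (use W in \<open>auto intro: compact_Times\<close>)
  then obtain \<eta> where \<eta>: "\<eta> > 0"
    "\<And>w w'. w \<in> W \<times> cball 0 1 \<Longrightarrow> w' \<in> W \<times> cball 0 1 \<Longrightarrow> dist w' w < \<eta> \<Longrightarrow>
        dist (DF (fst w') (snd w')) (DF (fst w) (snd w)) < \<epsilon>"
    unfolding uniformly_continuous_on_def using \<epsilon> by metis
  \<comment> \<open>On unit vectors \<open>h\<close> this is uniform continuity of \<open>DF\<close>; linearity scales it up.\<close>
  have "norm (DF u h - DF x h) \<le> \<epsilon> * norm h"
    if ux: "u \<in> W" "x \<in> W" "dist u x < \<eta>" for u x h
  proof (cases "h = 0")
    case True
    have "u \<in> U" "x \<in> U" using ux W(2) by auto
    then show ?thesis using True linear_0[OF linear_DF] by simp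
  next
    case False
    have "dist (DF u (h /\<^sub>R norm h)) (DF x (h /\<^sub>R norm h)) < \<epsilon>"
      using \<eta>(2)[of "(x, h /\<^sub>R norm h)" "(u, h /\<^sub>R norm h)"] ux False by (simp add: dist_Pair_Pair)
    moreover have "u \<in> U" "x \<in> U" using ux W(2) by auto
    then have "DF u h - DF x h = norm h *\<^sub>R (DF u (h /\<^sub>R norm h) - DF x (h /\<^sub>R norm h))"
      using DF_scaleR_unit[of u h] DF_scaleR_unit[of x h] False by (simp add: scaleR_diff_right)
    ultimately show ?thesis by (simp add: dist_norm mult.commute[of \<epsilon>] mult_left_mono)
  qed
  then show ?thesis using that[OF \<eta>(1)] by (metis fun_diff_def onorm_le)
qed

lemma linearization_uniform_along_solution:
  assumes xs: "ode_solution U F x0 xs" and \<epsilon>: "\<epsilon> > 0"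
  obtains \<eta> where "\<eta> > 0"
    "\<And>t y. t \<in> {0..1} \<Longrightarrow> norm (y - xs t) < \<eta> \<Longrightarrow>
        norm (F y - F (xs t) - DF (xs t) (y - xs t)) \<le> \<epsilon> * norm (y - xs t)"
proof -
  have "compact (xs ` {0..1})" "xs ` {0..1} \<subseteq> U"
    using compact_continuous_image[OF ode_solution_continuous[OF xs]] xs
    unfolding ode_solution_def by auto
  then obtain e W where e: "e > 0" "compact W" "W \<subseteq> U" "\<And>x. x \<in> xs ` {0..1} \<Longrightarrow> cball x e \<subseteq> W"
    using compact_thickening open_U by metis
  obtain \<eta>0 where \<eta>0: "\<eta>0 > 0" "\<And>u x. u \<in> W \<Longrightarrow> x \<in> W \<Longrightarrow> dist u x < \<eta>0 \<Longrightarrow> onorm (DF u - DF x) \<le> \<epsilon>"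
    using DF_uniformly_continuous_on_compact[OF e(2,3) \<epsilon>] by blast
  define \<eta> where "\<eta> = min \<eta>0 e"
  have "norm (F y - F x - DF x (y - x)) \<le> \<epsilon> * norm (y - x)"
    if t: "t \<in> {0..1}" and x: "x = xs t" and y: "norm (y - x) < \<eta>" for t x y
  proof -
    have ball_W: "ball x \<eta> \<subseteq> W" using e(4)[of x] t x unfolding \<eta>_def by auto
    then have x_W: "x \<in> W" using \<eta>0(1) e(1) unfolding \<eta>_def by auto
    have "norm (F y - F x - DF x (y - x)) \<le> norm (y - x) * \<epsilon>"
    proof (rule differentiable_bound_linearization[where S="ball x \<eta>" and f'=DF])
      fix \<tau> :: real assume "\<tau> \<in> {0..1}"
      then have "norm (\<tau> *\<^sub>R (y - x)) \<le> norm (y - x)" by (auto simp: mult_left_le_one_le)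
      then show "x + \<tau> *\<^sub>R (y - x) \<in> ball x \<eta>" using y by (simp add: dist_norm)
    next
      fix u assume "u \<in> ball x \<eta>"
      then have u: "u \<in> W" "dist u x < \<eta>0" using ball_W unfolding \<eta>_def by (auto simp: dist_commute)
      show "(F has_derivative DF u) (at u within ball x \<eta>)"
        using F_has_derivative u e(3) has_derivative_at_withinI by blast
      show "onorm (DF u - DF x) \<le> \<epsilon>" using \<eta>0(2)[OF u(1) x_W u(2)] .
    qed (use \<eta>0 e in \<open>auto simp: \<eta>_def\<close>)
    then show ?thesis by (simp add: mult.commute)
  qed
  moreover have "\<eta> > 0" unfolding \<eta>_def using \<eta>0 e by simp
  ultimately show ?thesis using that by blast
qed

text \<open>If \<open>\<lambda>\<close> solves the adjoint of the linearized equation, \<open>\<lambda> \<bullet> (y - xs)\<close> is constant up to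
  the linearization error, which is \<open>o(r)\<close> for solutions \<open>y\<close> within distance \<open>r\<close> of \<open>xs\<close>.\<close>

lemma adjoint_pairing_estimate:
  assumes xs: "ode_solution U F x0 xs"
    and lam: "\<And>t. t \<in> {0..1} \<Longrightarrow> (lam has_vector_derivative - lam' t) (at t within {0..1})"
    and adj: "\<And>t h. t \<in> {0..1} \<Longrightarrow> lam' t \<bullet> h = lam t \<bullet> DF (xs t) h"
    and e: "e > 0"
  obtains \<eta> where "\<eta> > 0"
    "\<And>y y0 r. ode_solution U F y0 y \<Longrightarrow> (\<And>t. t \<in> {0..1} \<Longrightarrow> norm (y t - xs t) \<le> r) \<Longrightarrow> r < \<eta> \<Longrightarrow>
       \<bar>lam 1 \<bullet> (y 1 - xs 1) - lam 0 \<bullet> (y0 - x0)\<bar> \<le> e * r"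
proof -
  obtain \<Lambda> where \<Lambda>: "\<Lambda> \<ge> 0" "\<And>t. t \<in> {0..1} \<Longrightarrow> norm (lam t) \<le> \<Lambda>"
    using norm_bounded_on_compact[OF continuous_on_vector_derivative[OF lam] compact_Icc] by blast
  define \<epsilon> where "\<epsilon> = e / (\<Lambda> + 1)"
  have \<epsilon>: "\<epsilon> > 0" "\<Lambda> * \<epsilon> \<le> e" unfolding \<epsilon>_def using e \<Lambda>(1) by (auto simp: field_simps)
  obtain \<eta> where \<eta>: "\<eta> > 0" "\<And>t y. t \<in> {0..1} \<Longrightarrow> norm (y - xs t) < \<eta> \<Longrightarrow>
      norm (F y - F (xs t) - DF (xs t) (y - xs t)) \<le> \<epsilon> * norm (y - xs t)"
    using linearization_uniform_along_solution[OF xs \<epsilon>(1)] by blast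
  have "\<bar>lam 1 \<bullet> (y 1 - xs 1) - lam 0 \<bullet> (y0 - x0)\<bar> \<le> e * r"
    if y: "ode_solution U F y0 y" and near: "\<And>t. t \<in> {0..1} \<Longrightarrow> norm (y t - xs t) \<le> r" and "r < \<eta>"
    for y y0 r
  proof -
    define R where "R t = F (y t) - F (xs t) - DF (xs t) (y t - xs t)" for t
    have deriv: "((\<lambda>t. lam t \<bullet> (y t - xs t)) has_vector_derivative lam t \<bullet> R t) (at t within {0..1})"
      if t: "t \<in> {0..1}" for t
    proof -
      have "((\<lambda>t. y t - xs t) has_vector_derivative F (y t) - F (xs t)) (at t within {0..1})"
        using y xs t unfolding ode_solution_def by (auto intro: has_vector_derivative_diff)
      then have "((\<lambda>t. lam t \<bullet> (y t - xs t)) has_vector_derivative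
          lam t \<bullet> (F (y t) - F (xs t)) + (- lam' t) \<bullet> (y t - xs t)) (at t within {0..1})"
        by (rule bounded_bilinear.has_vector_derivative[OF bounded_bilinear_inner lam[OF t]])
      moreover have "lam t \<bullet> (F (y t) - F (xs t)) + (- lam' t) \<bullet> (y t - xs t) = lam t \<bullet> R t"
        unfolding R_def using adj[OF t, of "y t - xs t"] by (simp only: inner_diff_right inner_minus_left)
      ultimately show ?thesis by simp
    qed
    have "norm (lam t \<bullet> R t) \<le> e * r" if t: "t \<in> {0..1}" for t
    proof -
      have "norm (R t) \<le> \<epsilon> * norm (y t - xs t)"
        unfolding R_def using \<eta>(2)[OF t] near[OF t] \<open>r < \<eta>\<close> by force
      also have "\<dots> \<le> \<epsilon> * r" using near[OF t] \<epsilon>(1) by (simp add: mult_left_mono)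
      finally have "norm (lam t \<bullet> R t) \<le> \<Lambda> * (\<epsilon> * r)"
        using Cauchy_Schwarz_ineq2[of "lam t" "R t"] \<Lambda>(2)[OF t] \<Lambda>(1)
        by (simp add: order_trans[OF _ mult_mono])
      also have "\<dots> \<le> e * r"
        using mult_right_mono[OF \<epsilon>(2) order_trans[OF norm_ge_zero near[OF t]]] by (simp add: mult.assoc)
      finally show ?thesis .
    qed
    from vector_derivative_bound_imp_lipschitz[OF convex_real_interval(5) deriv this, of 0 1]
    show ?thesis using y xs unfolding ode_solution_def by simp
  qed
  with \<eta>(1) that show ?thesis by blast
qed

lemma flow_end_eq: "ode_solution U F y0 y \<Longrightarrow> flow_end U F y0 = y 1"
  unfolding flow_end_def by (rule the_equality) (auto dest: ode_solution_unique[of y0 y _ 1])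

lemma flow_end_lipschitz_at:
  assumes xs: "ode_solution U F x0 xs"
  obtains \<delta> C where "\<delta> > 0" "C \<ge> 0"
    "\<And>y0. norm (y0 - x0) < \<delta> \<Longrightarrow> norm (flow_end U F y0 - flow_end U F x0) \<le> C * norm (y0 - x0)"
proof -
  obtain \<delta> C where \<delta>: "\<delta> > 0" "C \<ge> 0" "\<And>y0. norm (y0 - x0) < \<delta> \<Longrightarrow>
      \<exists>y. ode_solution U F y0 y \<and> (\<forall>t\<in>{0..1}. norm (y t - xs t) \<le> C * norm (y0 - x0))"
    using ode_solution_exists_near[OF xs] by blast
  have "norm (flow_end U F y0 - flow_end U F x0) \<le> C * norm (y0 - x0)" if "norm (y0 - x0) < \<delta>" for y0
    using \<delta>(3)[OF that] flow_end_eq flow_end_eq[OF xs] by fastforce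
  with \<delta>(1,2) that show ?thesis by blast
qed

lemma pairing_flow_end_has_derivative:
  assumes xs: "ode_solution U F x0 xs"
    and lam: "\<And>t. t \<in> {0..1} \<Longrightarrow> (lam has_vector_derivative - lam' t) (at t within {0..1})"
    and adj: "\<And>t h. t \<in> {0..1} \<Longrightarrow> lam' t \<bullet> h = lam t \<bullet> DF (xs t) h"
  shows "((\<lambda>y0. lam 1 \<bullet> flow_end U F y0) has_derivative (\<lambda>h. lam 0 \<bullet> h)) (at x0)"
  unfolding has_derivative_at_alt
proof (intro conjI allI impI)
  show "bounded_linear (\<lambda>h. lam 0 \<bullet> h)" by (rule bounded_linear_inner_right)
  fix e :: real assume e: "e > 0"
  obtain \<delta> C where \<delta>: "\<delta> > 0" "C \<ge> 0" "\<And>y0. norm (y0 - x0) < \<delta> \<Longrightarrow>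
      \<exists>y. ode_solution U F y0 y \<and> (\<forall>t\<in>{0..1}. norm (y t - xs t) \<le> C * norm (y0 - x0))"
    using ode_solution_exists_near[OF xs] by blast
  obtain \<eta> where \<eta>: "\<eta> > 0" "\<And>y y0 r. ode_solution U F y0 y \<Longrightarrow>
      (\<And>t. t \<in> {0..1} \<Longrightarrow> norm (y t - xs t) \<le> r) \<Longrightarrow> r < \<eta> \<Longrightarrow>
      \<bar>lam 1 \<bullet> (y 1 - xs 1) - lam 0 \<bullet> (y0 - x0)\<bar> \<le> e / (C + 1) * r"
    using adjoint_pairing_estimate[OF xs lam adj, of "e / (C + 1)"] e \<delta>(2)
    by (metis add_nonneg_pos divide_pos_pos zero_less_one)
  show "\<exists>d>0. \<forall>y0. norm (y0 - x0) < d \<longrightarrow> norm (lam 1 \<bullet> flow_end U F y0 - lam 1 \<bullet> flow_end U F x0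
      - lam 0 \<bullet> (y0 - x0)) \<le> e * norm (y0 - x0)"
  proof (intro exI[of _ "min \<delta> (\<eta> / (C + 1))"] conjI allI impI)
    show "min \<delta> (\<eta> / (C + 1)) > 0" using \<delta> \<eta> by simp
    fix y0 assume y0: "norm (y0 - x0) < min \<delta> (\<eta> / (C + 1))"
    obtain y where y: "ode_solution U F y0 y" "\<And>t. t \<in> {0..1} \<Longrightarrow> norm (y t - xs t) \<le> C * norm (y0 - x0)"
      using \<delta>(3) y0 by force
    have "(C + 1) * norm (y0 - x0) < \<eta>" using y0 \<delta>(2) by (simp add: field_simps)
    then have "C * norm (y0 - x0) < \<eta>" using norm_ge_zero[of "y0 - x0"] unfolding distrib_right by linarith
    from \<eta>(2)[OF y this]
    have "\<bar>lam 1 \<bullet> (y 1 - xs 1) - lam 0 \<bullet> (y0 - x0)\<bar> \<le> e * (C / (C + 1)) * norm (y0 - x0)" by simp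
    also have "\<dots> \<le> e * norm (y0 - x0)" using e \<delta>(2) by (intro mult_right_mono) (auto simp: field_simps)
    finally show "norm (lam 1 \<bullet> flow_end U F y0 - lam 1 \<bullet> flow_end U F x0 - lam 0 \<bullet> (y0 - x0))
        \<le> e * norm (y0 - x0)"
      using flow_end_eq[OF y(1)] flow_end_eq[OF xs] by (simp add: inner_diff_right)
  qed
qed

theorem adjoint_sensitivity:
  assumes xs: "ode_solution U F x0 xs"
    and lam: "\<And>t. t \<in> {0..1} \<Longrightarrow> (lam has_vector_derivative - lam' t) (at t within {0..1})"
    and adj: "\<And>t h. t \<in> {0..1} \<Longrightarrow> lam' t \<bullet> h = lam t \<bullet> DF (xs t) h"
    and G: "(G has_derivative DG) (at (xs 1))" and lam_1: "\<And>h. lam 1 \<bullet> h = DG h"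
  shows "((\<lambda>y0. G (flow_end U F y0)) has_derivative (\<lambda>h. lam 0 \<bullet> h)) (at x0)"
proof -
  obtain \<delta> C where lip: "\<delta> > 0" "C \<ge> 0"
    "\<And>y0. norm (y0 - x0) < \<delta> \<Longrightarrow> norm (flow_end U F y0 - flow_end U F x0) \<le> C * norm (y0 - x0)"
    using flow_end_lipschitz_at[OF xs] by blast
  have "(G has_derivative DG) (at (flow_end U F x0))" using G flow_end_eq[OF xs] by simp
  moreover have "((\<lambda>y0. DG (flow_end U F y0)) has_derivative (\<lambda>h. lam 0 \<bullet> h)) (at x0)"
    using pairing_flow_end_has_derivative[OF xs lam adj] by (simp add: lam_1)
  ultimately show ?thesis by (rule has_derivative_compose_lipschitz[OF _ _ lip])
qed

end

section \<open>Matrices, gradients and symmetric second derivatives\<close>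

lemma bounded_bilinear_matrix_vector_mult:
  "bounded_bilinear ((*v) :: real^'n^'m \<Rightarrow> real^'n \<Rightarrow> real^'m)"
proof -
  have "linear (\<lambda>A::real^'n^'m. A *v b)" for b
    unfolding linear_iff matrix_vector_mult_def
    by (auto simp: vec_eq_iff sum.distrib algebra_simps sum_distrib_left)
  then have "bilinear ((*v) :: real^'n^'m \<Rightarrow> real^'n \<Rightarrow> real^'m)"
    unfolding bilinear_def using matrix_vector_mul_linear by auto
  then show ?thesis using bilinear_conv_bounded_bilinear by blast
qed

lemmas bounded_linear_matrix_vector_mult_left =
  bounded_bilinear.bounded_linear_left[OF bounded_bilinear_matrix_vector_mult]

lemma inner_symmetric_matrix:
  fixes A :: "real^'n^'n"
  assumes "transpose A = A"
  shows "x \<bullet> (A *v y) = y \<bullet> (A *v x)"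
proof -
  have "x \<bullet> (A *v y) = (x v* A) \<bullet> y" by (simp add: dot_lmul_matrix)
  also have "x v* A = A *v x" using vector_transpose_matrix[of x A] assms by simp
  finally show ?thesis by (simp add: inner_commute)
qed

lemma linear_transpose: "linear (transpose :: real^'n^'m \<Rightarrow> real^'m^'n)"
  unfolding linear_iff transpose_def by (auto simp: vec_eq_iff)

lemma inner_sum_Basis_linear:
  fixes l :: "'a::euclidean_space \<Rightarrow> real"
  assumes "linear l"
  shows "(\<Sum>b\<in>Basis. l b *\<^sub>R b) \<bullet> v = l v"
proof -
  have "l v = l (\<Sum>b\<in>Basis. (v \<bullet> b) *\<^sub>R b)" by (simp add: euclidean_representation)
  also have "\<dots> = (\<Sum>b\<in>Basis. (v \<bullet> b) * l b)"
    using assms by (simp add: linear_sum linear_cmul)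
  also have "\<dots> = (\<Sum>b\<in>Basis. l b *\<^sub>R b) \<bullet> v"
    by (simp add: inner_sum_left inner_sum_right inner_commute mult.commute)
  finally show ?thesis by simp
qed

lemma grad_eq_sum_Basis:
  assumes "(f has_derivative f') (at x)"
  shows "grad f x = (\<Sum>b\<in>Basis. f' b *\<^sub>R b)"
  unfolding grad_def using frechet_derivative_at[OF assms] by simp

lemma inner_grad:
  assumes "(f has_derivative f') (at x)"
  shows "grad f x \<bullet> v = f' v"
  using grad_eq_sum_Basis[OF assms] inner_sum_Basis_linear[OF has_derivative_linear[OF assms]] by simp

lemma quadratic_form_has_derivative:
  fixes A :: "real^'n^'n"
  assumes "transpose A = A"
  shows "((\<lambda>p. (1/2) * (p \<bullet> (A *v p))) has_derivative (\<lambda>v. (A *v p0) \<bullet> v)) (at p0)"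
proof -
  have "((\<lambda>p. (1/2) * (p \<bullet> (A *v p))) has_derivative
      (\<lambda>v. (1/2) * (p0 \<bullet> (A *v v) + v \<bullet> (A *v p0)))) (at p0)"
    by (auto intro!: derivative_eq_intros bounded_linear.has_derivative[OF matrix_vector_mul_bounded_linear])
  then show ?thesis
    using inner_symmetric_matrix[OF assms, of p0] by (simp add: inner_commute)
qed

lemma has_real_derivative_along_line:
  fixes \<phi> :: "'a::real_normed_vector \<Rightarrow> real"
  assumes "(\<phi> has_derivative \<phi>') (at (x + \<tau> *\<^sub>R a))"
  shows "((\<lambda>\<tau>. \<phi> (x + \<tau> *\<^sub>R a)) has_real_derivative \<phi>' a) (at \<tau>)"
proof -
  have l: "((\<lambda>t. x + t *\<^sub>R a) has_derivative (\<lambda>h. h *\<^sub>R a)) (at \<tau>)"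
    by (auto intro!: derivative_eq_intros)
  have "((\<lambda>t. \<phi> (x + t *\<^sub>R a)) has_derivative (\<lambda>h. \<phi>' (h *\<^sub>R a))) (at \<tau>)"
    using has_derivative_compose[OF l assms] by (simp add: o_def)
  moreover have "(\<lambda>h. \<phi>' (h *\<^sub>R a)) = (\<lambda>h. h * \<phi>' a)"
    using linear_cmul[OF has_derivative_linear[OF assms]] by auto
  ultimately have D: "((\<lambda>t. \<phi> (x + t *\<^sub>R a)) has_derivative (\<lambda>h. h * \<phi>' a)) (at \<tau>)" by simp
  show ?thesis unfolding has_field_derivative_def
    by (rule has_derivative_eq_rhs[OF D]) (simp add: fun_eq_iff mult.commute)
qed

lemma mean_value_Icc_0:
  fixes g :: "real \<Rightarrow> real"
  assumes "s > 0" "\<And>\<tau>. \<tau> \<in> {0..s} \<Longrightarrow> (g has_real_derivative g' \<tau>) (at \<tau>)"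
  obtains \<tau> where "\<tau> \<in> {0..s}" "g s - g 0 = s * g' \<tau>"
proof -
  have "\<exists>\<tau>\<in>{0<..<s}. g s - g 0 = g' \<tau> * (s - 0)"
    using assms by (intro mvt_simple)
      (auto intro: has_derivative_at_withinI has_field_derivative_imp_has_derivative)
  then obtain \<tau> where "\<tau> \<in> {0<..<s}" "g s - g 0 = g' \<tau> * (s - 0)" by blast
  then show ?thesis using that[of \<tau>] by (simp add: mult.commute)
qed

lemma second_difference_mean_value:
  fixes \<phi> :: "'a::real_normed_vector \<Rightarrow> real"
  assumes S: "\<And>\<sigma> \<tau>. \<sigma> \<in> {0..s} \<Longrightarrow> \<tau> \<in> {0..s} \<Longrightarrow> x + \<sigma> *\<^sub>R b + \<tau> *\<^sub>R a \<in> S"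
    and d1: "\<And>y. y \<in> S \<Longrightarrow> (\<phi> has_derivative Pa y) (at y)"
    and d2: "\<And>y u. y \<in> S \<Longrightarrow> ((\<lambda>y. Pa y u) has_derivative (\<lambda>v. Pb y v u)) (at y)"
    and s: "s > 0"
  obtains \<sigma> \<tau> where "\<sigma> \<in> {0..s}" "\<tau> \<in> {0..s}"
    "\<phi> (x + s *\<^sub>R b + s *\<^sub>R a) - \<phi> (x + s *\<^sub>R a) - (\<phi> (x + s *\<^sub>R b) - \<phi> x)
       = s^2 * Pb (x + \<sigma> *\<^sub>R b + \<tau> *\<^sub>R a) b a"
proof -
  define g where "g \<tau> = \<phi> (x + s *\<^sub>R b + \<tau> *\<^sub>R a) - \<phi> (x + \<tau> *\<^sub>R a)" for \<tau>
  have "(g has_real_derivative Pa (x + s *\<^sub>R b + \<tau> *\<^sub>R a) a - Pa (x + \<tau> *\<^sub>R a) a) (at \<tau>)"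
    if "\<tau> \<in> {0..s}" for \<tau>
  proof -
    have "x + s *\<^sub>R b + \<tau> *\<^sub>R a \<in> S" "x + \<tau> *\<^sub>R a \<in> S" using S[of s \<tau>] S[of 0 \<tau>] that s by auto
    then show ?thesis unfolding g_def
      by (intro DERIV_diff has_real_derivative_along_line[OF d1])
  qed
  then obtain \<tau> where \<tau>: "\<tau> \<in> {0..s}"
    "g s - g 0 = s * (Pa (x + s *\<^sub>R b + \<tau> *\<^sub>R a) a - Pa (x + \<tau> *\<^sub>R a) a)"
    using mean_value_Icc_0[OF s, of g "\<lambda>\<tau>. Pa (x + s *\<^sub>R b + \<tau> *\<^sub>R a) a - Pa (x + \<tau> *\<^sub>R a) a"]
    by blast
  have "((\<lambda>\<sigma>. Pa (x + \<tau> *\<^sub>R a + \<sigma> *\<^sub>R b) a) has_real_derivative Pb (x + \<tau> *\<^sub>R a + \<sigma> *\<^sub>R b) b a) (at \<sigma>)"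
    if "\<sigma> \<in> {0..s}" for \<sigma>
    using has_real_derivative_along_line[of "\<lambda>y. Pa y a" "\<lambda>v. Pb (x + \<tau> *\<^sub>R a + \<sigma> *\<^sub>R b) v a"
        "x + \<tau> *\<^sub>R a" \<sigma> b] d2[of "x + \<tau> *\<^sub>R a + \<sigma> *\<^sub>R b" a] S[OF that \<tau>(1)]
    by (simp add: ac_simps)
  then obtain \<sigma> where \<sigma>: "\<sigma> \<in> {0..s}"
    "Pa (x + \<tau> *\<^sub>R a + s *\<^sub>R b) a - Pa (x + \<tau> *\<^sub>R a + 0 *\<^sub>R b) a = s * Pb (x + \<tau> *\<^sub>R a + \<sigma> *\<^sub>R b) b a"
    using mean_value_Icc_0[OF s, of "\<lambda>\<sigma>. Pa (x + \<tau> *\<^sub>R a + \<sigma> *\<^sub>R b) a"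
        "\<lambda>\<sigma>. Pb (x + \<tau> *\<^sub>R a + \<sigma> *\<^sub>R b) b a"] by blast
  have "\<phi> (x + s *\<^sub>R b + s *\<^sub>R a) - \<phi> (x + s *\<^sub>R a) - (\<phi> (x + s *\<^sub>R b) - \<phi> x) = g s - g 0"
    unfolding g_def by simp
  also have "\<dots> = s * (s * Pb (x + \<tau> *\<^sub>R a + \<sigma> *\<^sub>R b) b a)"
    using \<tau>(2) \<sigma>(2) by (simp add: ac_simps)
  also have "\<dots> = s^2 * Pb (x + \<sigma> *\<^sub>R b + \<tau> *\<^sub>R a) b a"
    by (simp add: power2_eq_square ac_simps)
  finally show ?thesis using that \<sigma>(1) \<tau>(1) by blast
qed

lemma mixed_derivatives_agree_nearby:
  fixes \<phi> :: "'a::real_normed_vector \<Rightarrow> real"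
  assumes r: "r > 0" "ball x r \<subseteq> S"
    and d1: "\<And>y. y \<in> S \<Longrightarrow> (\<phi> has_derivative Pa y) (at y)"
    and d2: "\<And>y u. y \<in> S \<Longrightarrow> ((\<lambda>y. Pa y u) has_derivative (\<lambda>v. Pb y v u)) (at y)"
  obtains \<xi> \<xi>' where "dist \<xi> x < r" "dist \<xi>' x < r" "Pb \<xi> b a = Pb \<xi>' a b"
proof -
  define s where "s = r / (2 * (norm a + norm b + 1))"
  have den: "2 * (norm a + norm b + 1) > 0" using norm_ge_zero[of a] norm_ge_zero[of b] by (smt (verit))
  then have "s > 0" using r(1) unfolding s_def by simp
  then have "s * (norm a + norm b) < s * (2 * (norm a + norm b + 1))"
    using norm_ge_zero[of a] norm_ge_zero[of b] by (intro mult_strict_left_mono) (smt (verit))+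
  moreover have "s * (2 * (norm a + norm b + 1)) = r" using den unfolding s_def by simp
  ultimately have s: "s > 0" "s * (norm a + norm b) < r" using \<open>s > 0\<close> by auto
  have near: "dist (x + \<sigma> *\<^sub>R u + \<tau> *\<^sub>R v) x < r"
    if "\<sigma> \<in> {0..s}" "\<tau> \<in> {0..s}" "{u, v} = {a, b}" for \<sigma> \<tau> u v
  proof -
    have "norm (\<sigma> *\<^sub>R u + \<tau> *\<^sub>R v) \<le> \<sigma> * norm u + \<tau> * norm v"
      using that(1,2) norm_triangle_ineq[of "\<sigma> *\<^sub>R u" "\<tau> *\<^sub>R v"] by simp
    also have "\<dots> \<le> s * norm u + s * norm v"
      using that(1,2) by (intro add_mono mult_right_mono) auto
    also have "\<dots> = s * (norm a + norm b)" using that(3) by (auto simp: doubleton_eq_iff algebra_simps)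
    finally show ?thesis using s(2) by (simp add: dist_norm add.assoc)
  qed
  have in_S: "x + \<sigma> *\<^sub>R u + \<tau> *\<^sub>R v \<in> S"
    if "\<sigma> \<in> {0..s}" "\<tau> \<in> {0..s}" "{u, v} = {a, b}" for \<sigma> \<tau> u v
    using near[OF that] r(2) by (auto simp: dist_commute)
  obtain \<sigma> \<tau> where \<sigma>\<tau>: "\<sigma> \<in> {0..s}" "\<tau> \<in> {0..s}"
    "\<phi> (x + s *\<^sub>R b + s *\<^sub>R a) - \<phi> (x + s *\<^sub>R a) - (\<phi> (x + s *\<^sub>R b) - \<phi> x)
       = s^2 * Pb (x + \<sigma> *\<^sub>R b + \<tau> *\<^sub>R a) b a"
    using second_difference_mean_value[OF in_S d1 d2 s(1), of b a] by auto
  obtain \<sigma>' \<tau>' where \<sigma>\<tau>': "\<sigma>' \<in> {0..s}" "\<tau>' \<in> {0..s}"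
    "\<phi> (x + s *\<^sub>R a + s *\<^sub>R b) - \<phi> (x + s *\<^sub>R b) - (\<phi> (x + s *\<^sub>R a) - \<phi> x)
       = s^2 * Pb (x + \<sigma>' *\<^sub>R a + \<tau>' *\<^sub>R b) a b"
    using second_difference_mean_value[OF in_S d1 d2 s(1), of a b] by auto
  \<comment> \<open>Both mixed second differences are the same number.\<close>
  have "Pb (x + \<sigma> *\<^sub>R b + \<tau> *\<^sub>R a) b a = Pb (x + \<sigma>' *\<^sub>R a + \<tau>' *\<^sub>R b) a b"
    using \<sigma>\<tau>(3) \<sigma>\<tau>'(3) s(1) by (simp add: algebra_simps)
  moreover have "dist (x + \<sigma> *\<^sub>R b + \<tau> *\<^sub>R a) x < r" "dist (x + \<sigma>' *\<^sub>R a + \<tau>' *\<^sub>R b) x < r"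
    using near \<sigma>\<tau>(1,2) \<sigma>\<tau>'(1,2) by (auto simp: insert_commute)
  ultimately show ?thesis using that by blast
qed

lemma second_derivative_symmetric:
  fixes \<phi> :: "'a::real_normed_vector \<Rightarrow> real"
  assumes S: "open S" "x \<in> S"
    and d1: "\<And>y. y \<in> S \<Longrightarrow> (\<phi> has_derivative Pa y) (at y)"
    and d2: "\<And>y u. y \<in> S \<Longrightarrow> ((\<lambda>y. Pa y u) has_derivative (\<lambda>v. Pb y v u)) (at y)"
    and cont: "\<And>u v. continuous (at x) (\<lambda>y. Pb y u v)"
  shows "Pb x a b = Pb x b a"
proof -
  have close: "\<bar>Pb x a b - Pb x b a\<bar> \<le> e" if "e > 0" for e
  proof -
    obtain r1 where r1: "r1 > 0" "\<And>y. dist y x < r1 \<Longrightarrow> \<bar>Pb y b a - Pb x b a\<bar> < e / 2"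
      using cont[of b a] \<open>e > 0\<close> unfolding continuous_at_eps_delta by (metis dist_real_def half_gt_zero)
    obtain r2 where r2: "r2 > 0" "\<And>y. dist y x < r2 \<Longrightarrow> \<bar>Pb y a b - Pb x a b\<bar> < e / 2"
      using cont[of a b] \<open>e > 0\<close> unfolding continuous_at_eps_delta by (metis dist_real_def half_gt_zero)
    obtain r3 where r3: "r3 > 0" "ball x r3 \<subseteq> S" using S open_contains_ball by blast
    have "min r1 (min r2 r3) > 0" "ball x (min r1 (min r2 r3)) \<subseteq> S" using r1 r2 r3 by auto
    then obtain \<xi> \<xi>' where \<xi>: "dist \<xi> x < min r1 (min r2 r3)" "dist \<xi>' x < min r1 (min r2 r3)"
      "Pb \<xi> b a = Pb \<xi>' a b"
      by (rule mixed_derivatives_agree_nearby[OF _ _ d1 d2])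
    have "\<bar>Pb \<xi> b a - Pb x b a\<bar> < e / 2" using r1(2) \<xi>(1) by simp
    moreover have "\<bar>Pb \<xi>' a b - Pb x a b\<bar> < e / 2" using r2(2) \<xi>(2) by simp
    ultimately show ?thesis using \<xi>(3) by linarith
  qed
  have "\<bar>Pb x a b - Pb x b a\<bar> \<le> 0" by (rule field_le_epsilon) (simp add: close)
  then show ?thesis by simp
qed

section \<open>The Hamiltonian vector field of \<open>h(q, p) = p\<^sup>T K\<^sub>q p / 2\<close>\<close>

locale C2_kernel =
  fixes M :: "(real^'n) set" and K :: "real^'n \<Rightarrow> real^'n^'n"
    and K1 :: "real^'n \<Rightarrow> (real^'n) \<Rightarrow>\<^sub>L (real^'n^'n)"
    and K2 :: "real^'n \<Rightarrow> (real^'n) \<Rightarrow>\<^sub>L ((real^'n) \<Rightarrow>\<^sub>L (real^'n^'n))"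
  assumes M_open: "open M" and K_sym: "\<And>x. x \<in> M \<Longrightarrow> transpose (K x) = K x"
   and K_has_derivative: "\<And>x. x \<in> M \<Longrightarrow> (K has_derivative blinfun_apply (K1 x)) (at x)"
   and K1_has_derivative: "\<And>x. x \<in> M \<Longrightarrow> (K1 has_derivative blinfun_apply (K2 x)) (at x)"
   and continuous_K2: "continuous_on M K2"
begin

abbreviation DK :: "real^'n \<Rightarrow> real^'n \<Rightarrow> real^'n^'n"
  where "DK x u \<equiv> blinfun_apply (K1 x) u"

abbreviation D2K :: "real^'n \<Rightarrow> real^'n \<Rightarrow> real^'n \<Rightarrow> real^'n^'n"
  where "D2K x u v \<equiv> blinfun_apply (blinfun_apply (K2 x) u) v"

lemma K1_apply_has_derivative: "x \<in> M \<Longrightarrow> ((\<lambda>y. DK y u) has_derivative (\<lambda>v. D2K x v u)) (at x)"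
  using bounded_linear.has_derivative[OF blinfun.bounded_linear_left K1_has_derivative] by simp

lemma transpose_K1:
  assumes x: "x \<in> M"
  shows "transpose (DK x v) = DK x v"
proof -
  have bt: "bounded_linear (transpose :: real^'n^'n \<Rightarrow> real^'n^'n)"
    using linear_transpose linear_conv_bounded_linear by blast
  have "((\<lambda>y. transpose (K y)) has_derivative (\<lambda>v. transpose (DK x v))) (at x)"
    using bounded_linear.has_derivative[OF bt K_has_derivative[OF x]] .
  then have "(K has_derivative (\<lambda>v. transpose (DK x v))) (at x)"
    by (rule has_derivative_transform_within_open[OF _ M_open x]) (use K_sym in auto)
  from has_derivative_unique[OF K_has_derivative[OF x] this] show ?thesis by metis
qed

lemma K2_symmetric:
  assumes x: "x \<in> M"
  shows "D2K x a b = D2K x b a"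
proof -
  have key: "w \<bullet> D2K x a b = w \<bullet> D2K x b a" for w
  proof (rule second_derivative_symmetric[where S=M and \<phi>="\<lambda>y. w \<bullet> K y" and Pa="\<lambda>y u. w \<bullet> DK y u"
        and Pb="\<lambda>y v u. w \<bullet> D2K y v u"])
    show "open M" "x \<in> M" by (fact M_open, fact x)
    fix y assume y: "y \<in> M"
    show "((\<lambda>y. w \<bullet> K y) has_derivative (\<lambda>u. w \<bullet> DK y u)) (at y)"
      by (rule has_derivative_inner_right[OF K_has_derivative[OF y]])
    fix u
    show "((\<lambda>y. w \<bullet> DK y u) has_derivative (\<lambda>v. w \<bullet> D2K y v u)) (at y)"
      by (rule has_derivative_inner_right[OF K1_apply_has_derivative[OF y]])
  next
    fix u v
    have c: "continuous (at x) K2" using continuous_K2 M_open x continuous_on_eq_continuous_at by blast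
    have bl: "bounded_linear (\<lambda>T::(real^'n) \<Rightarrow>\<^sub>L ((real^'n) \<Rightarrow>\<^sub>L (real^'n^'n)). w \<bullet> blinfun_apply (blinfun_apply T u) v)"
      by (rule bounded_linear_compose[OF bounded_linear_inner_right])
         (rule bounded_linear_compose[OF blinfun.bounded_linear_left blinfun.bounded_linear_left])
    show "continuous (at x) (\<lambda>y. w \<bullet> D2K y u v)"
      using bounded_linear.continuous[OF bl c] by simp
  qed
  have "(D2K x a b - D2K x b a) \<bullet> (D2K x a b - D2K x b a) = 0"
    using key[of "D2K x a b - D2K x b a"] by (simp add: inner_diff_right)
  then show ?thesis by simp
qed

definition kernel_grad :: "real^'n \<Rightarrow> real^'n \<Rightarrow> real^'n \<Rightarrow> real^'n" where
  "kernel_grad x a b = (\<Sum>i\<in>Basis. (a \<bullet> (DK x i *v b)) *\<^sub>R i)"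

definition kernel_hess :: "real^'n \<Rightarrow> real^'n \<Rightarrow> real^'n \<Rightarrow> real^'n" where
  "kernel_hess x a v = (\<Sum>i\<in>Basis. (a \<bullet> (D2K x v i *v a)) *\<^sub>R i)"

lemma K_mult_has_derivative: "x \<in> M \<Longrightarrow> ((\<lambda>y. K y *v b) has_derivative (\<lambda>v. DK x v *v b)) (at x)"
  using bounded_linear.has_derivative[OF bounded_linear_matrix_vector_mult_left K_has_derivative] by simp

lemma inner_K_mult_has_derivative: "x \<in> M \<Longrightarrow> ((\<lambda>y. a \<bullet> (K y *v b)) has_derivative (\<lambda>v. a \<bullet> (DK x v *v b))) (at x)"
  by (rule has_derivative_inner_right[OF K_mult_has_derivative])

lemma grad_inner_K_mult: "x \<in> M \<Longrightarrow> grad (\<lambda>y. a \<bullet> (K y *v b)) x = kernel_grad x a b"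
  unfolding kernel_grad_def using grad_eq_sum_Basis[OF inner_K_mult_has_derivative] by simp

lemma inner_kernel_grad: "x \<in> M \<Longrightarrow> kernel_grad x a b \<bullet> v = a \<bullet> (DK x v *v b)"
  using inner_grad[OF inner_K_mult_has_derivative] grad_inner_K_mult by metis

lemma frechet_derivative_K_mult: "x \<in> M \<Longrightarrow> frechet_derivative (\<lambda>y. K y *v b) (at x) = (\<lambda>v. DK x v *v b)"
  using frechet_derivative_at[OF K_mult_has_derivative] by simp

lemma kernel_grad_has_derivative:
  assumes "x \<in> M"
  shows "((\<lambda>y. kernel_grad y a b) has_derivative (\<lambda>v. \<Sum>i\<in>Basis. (a \<bullet> (D2K x v i *v b)) *\<^sub>R i)) (at x)"
  unfolding kernel_grad_def
  by (intro has_derivative_sum has_derivative_scaleR_left has_derivative_inner_right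
      bounded_linear.has_derivative[OF bounded_linear_matrix_vector_mult_left]
      K1_apply_has_derivative assms)

lemma frechet_derivative_grad_inner_K:
  assumes x: "x \<in> M"
  shows "frechet_derivative (\<lambda>y. grad (\<lambda>x. a \<bullet> (K x *v a)) y) (at x) = kernel_hess x a"
proof -
  have "((\<lambda>y. grad (\<lambda>x. a \<bullet> (K x *v a)) y) has_derivative
    (\<lambda>v. \<Sum>i\<in>Basis. (a \<bullet> (D2K x v i *v a)) *\<^sub>R i)) (at x)"
    by (rule has_derivative_transform_within_open[OF kernel_grad_has_derivative[OF x] M_open x]) (simp add: grad_inner_K_mult)
  from frechet_derivative_at[OF this] show ?thesis unfolding kernel_hess_def by (simp add: fun_eq_iff)
qed

lemma inner_kernel_hess: "x \<in> M \<Longrightarrow> kernel_hess x a v \<bullet> w = a \<bullet> (D2K x v w *v a)"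
proof -
  have bl: "bounded_linear (\<lambda>w. a \<bullet> (D2K x v w *v a))"
    by (rule bounded_linear_compose[OF bounded_linear_inner_right])
       (rule bounded_linear_compose[OF bounded_linear_matrix_vector_mult_left blinfun.bounded_linear_right])
  show ?thesis unfolding kernel_hess_def using inner_sum_Basis_linear[OF bounded_linear.linear[OF bl]] by simp
qed

definition ham_field :: "(real^'n) \<times> (real^'n) \<Rightarrow> (real^'n) \<times> (real^'n)" where
  "ham_field z = (K (fst z) *v snd z, -(1/2) *\<^sub>R kernel_grad (fst z) (snd z) (snd z))"

definition ham_field_deriv :: "(real^'n) \<times> (real^'n) \<Rightarrow> (real^'n) \<times> (real^'n) \<Rightarrow> (real^'n) \<times> (real^'n)" where
  "ham_field_deriv z h = (DK (fst z) (fst h) *v snd z + K (fst z) *v snd h,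
     -(1/2) *\<^sub>R (kernel_hess (fst z) (snd z) (fst h) + kernel_grad (fst z) (snd h) (snd z)
       + kernel_grad (fst z) (snd z) (snd h)))"

lemma ham_field_has_derivative:
  assumes z: "fst z \<in> M"
  shows "(ham_field has_derivative ham_field_deriv z) (at z)"
proof -
  have f1: "((\<lambda>z. K (fst z)) has_derivative (\<lambda>h. DK (fst z) (fst h))) (at z)"
    using has_derivative_compose[OF has_derivative_fst[OF has_derivative_ident] K_has_derivative[OF z]] .
  have f2: "((\<lambda>z. snd z) has_derivative (\<lambda>h. snd h)) (at z)"
    using has_derivative_snd[OF has_derivative_ident] .
  have A: "((\<lambda>z. K (fst z) *v snd z) has_derivative
      (\<lambda>h. K (fst z) *v snd h + DK (fst z) (fst h) *v snd z)) (at z)"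
    using bounded_bilinear.FDERIV[OF bounded_bilinear_matrix_vector_mult f1 f2] .
  have f3: "((\<lambda>z. DK (fst z) i) has_derivative
      (\<lambda>h. D2K (fst z) (fst h) i)) (at z)" for i
    using has_derivative_compose[OF has_derivative_fst[OF has_derivative_ident] K1_apply_has_derivative[OF z]] .
  have B: "((\<lambda>z. DK (fst z) i *v snd z) has_derivative
      (\<lambda>h. DK (fst z) i *v snd h + D2K (fst z) (fst h) i *v snd z)) (at z)" for i
    using bounded_bilinear.FDERIV[OF bounded_bilinear_matrix_vector_mult f3 f2] .
  have C: "((\<lambda>z. snd z \<bullet> (DK (fst z) i *v snd z)) has_derivative
      (\<lambda>h. snd z \<bullet> (DK (fst z) i *v snd h + D2K (fst z) (fst h) i *v snd z)
          + snd h \<bullet> (DK (fst z) i *v snd z))) (at z)" for i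
    using has_derivative_inner[OF f2 B] .
  have D: "((\<lambda>z. -(1/2) *\<^sub>R (\<Sum>i\<in>Basis. (snd z \<bullet> (DK (fst z) i *v snd z)) *\<^sub>R i)) has_derivative
      (\<lambda>h. -(1/2) *\<^sub>R (\<Sum>i\<in>Basis. (snd z \<bullet> (DK (fst z) i *v snd h + D2K (fst z) (fst h) i *v snd z)
          + snd h \<bullet> (DK (fst z) i *v snd z)) *\<^sub>R i))) (at z)"
    by (rule has_derivative_scaleR_right, rule has_derivative_sum, rule has_derivative_scaleR_left, rule C)
  have E: "(ham_field has_derivative (\<lambda>h. (K (fst z) *v snd h + DK (fst z) (fst h) *v snd z,
      -(1/2) *\<^sub>R (\<Sum>i\<in>Basis. (snd z \<bullet> (DK (fst z) i *v snd h + D2K (fst z) (fst h) i *v snd z)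
          + snd h \<bullet> (DK (fst z) i *v snd z)) *\<^sub>R i)))) (at z)"
    unfolding ham_field_def kernel_grad_def by (rule has_derivative_Pair[OF A D])
  show ?thesis
    by (rule has_derivative_eq_rhs[OF E])
       (simp add: fun_eq_iff ham_field_deriv_def kernel_grad_def kernel_hess_def inner_add_right
         scaleR_add_left sum.distrib algebra_simps)
qed

lemma continuous_K: "continuous_on M K"
  using K_has_derivative has_derivative_continuous continuous_at_imp_continuous_on by blast

lemma continuous_K1: "continuous_on M K1"
  using K1_has_derivative has_derivative_continuous continuous_at_imp_continuous_on by blast

lemma continuous_ham_field_deriv: "continuous_on ((M \<times> UNIV) \<times> UNIV) (\<lambda>w. ham_field_deriv (fst w) (snd w))"
proof -
  let ?S = "(M \<times> (UNIV :: (real^'n) set)) \<times> (UNIV :: ((real^'n) \<times> (real^'n)) set)"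
  have cK: "continuous_on ?S (\<lambda>w. K (fst (fst w)))"
    by (rule continuous_on_compose2[OF continuous_K]) (auto intro!: continuous_intros)
  have cK1: "continuous_on ?S (\<lambda>w. K1 (fst (fst w)))"
    by (rule continuous_on_compose2[OF continuous_K1]) (auto intro!: continuous_intros)
  have cK2: "continuous_on ?S (\<lambda>w. K2 (fst (fst w)))"
    by (rule continuous_on_compose2[OF continuous_K2]) (auto intro!: continuous_intros)
  note bl = bounded_bilinear.continuous_on[OF bounded_bilinear_blinfun_apply]
  note mv = bounded_bilinear.continuous_on[OF bounded_bilinear_matrix_vector_mult]
  show ?thesis unfolding ham_field_deriv_def kernel_grad_def kernel_hess_def
    by (intro continuous_intros bl mv cK cK1 cK2)
qed

lemma C1_field_ham_field: "C1_field (M \<times> UNIV) ham_field ham_field_deriv"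
proof
  show "open (M \<times> (UNIV :: (real^'n) set))" using M_open by (simp add: open_Times)
  show "\<And>x. x \<in> M \<times> UNIV \<Longrightarrow> (ham_field has_derivative ham_field_deriv x) (at x)" using ham_field_has_derivative by auto
  show "continuous_on ((M \<times> UNIV) \<times> UNIV) (\<lambda>z. ham_field_deriv (fst z) (snd z))" by (rule continuous_ham_field_deriv)
qed

lemma ham_field_eq: "q \<in> M \<Longrightarrow> ham_field (q, p) = (K q *v p, - (1/2) *\<^sub>R grad (\<lambda>x. p \<bullet> (K x *v p)) q)"
  unfolding ham_field_def by (simp add: grad_inner_K_mult)

lemma ode_solution_of_ham_sol:
  assumes "ham_sol M K q0 p0 q p"
  shows "ode_solution (M \<times> UNIV) ham_field (q0, p0) (\<lambda>t. (q t, p t))"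
  unfolding ode_solution_def
proof (intro conjI ballI)
  show "(q 0, p 0) = (q0, p0)" using assms unfolding ham_sol_def by simp
  fix t :: real assume t: "t \<in> {0..1}"
  have h: "q t \<in> M" "(q has_vector_derivative (K (q t) *v p t)) (at t within {0..1})"
     "(p has_vector_derivative (- (1/2) *\<^sub>R grad (\<lambda>x. p t \<bullet> (K x *v p t)) (q t))) (at t within {0..1})"
    using assms t unfolding ham_sol_def by auto
  show "(q t, p t) \<in> M \<times> UNIV" using h by simp
  show "((\<lambda>t. (q t, p t)) has_vector_derivative ham_field (q t, p t)) (at t within {0..1})"
    unfolding ham_field_eq[OF h(1)] by (rule has_vector_derivative_Pair[OF h(2) h(3)])
qed

lemma ham_sol_of_ode_solution:
  assumes "ode_solution (M \<times> UNIV) ham_field (q0, p0) x"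
  shows "ham_sol M K q0 p0 (\<lambda>t. fst (x t)) (\<lambda>t. snd (x t))"
  unfolding ham_sol_def
proof (intro conjI ballI)
  show "fst (x 0) = q0" "snd (x 0) = p0" using assms unfolding ode_solution_def by auto
  fix t :: real assume t: "t \<in> {0..1}"
  have h: "x t \<in> M \<times> UNIV" "(x has_vector_derivative ham_field (x t)) (at t within {0..1})"
    using assms t unfolding ode_solution_def by auto
  have e: "ham_field (x t) = (K (fst (x t)) *v snd (x t),
      - (1/2) *\<^sub>R grad (\<lambda>y. snd (x t) \<bullet> (K y *v snd (x t))) (fst (x t)))"
    using ham_field_eq[of "fst (x t)" "snd (x t)"] h(1) by (simp add: mem_Times_iff)
  show "fst (x t) \<in> M" using h(1) by (simp add: mem_Times_iff)
  show "((\<lambda>t. fst (x t)) has_vector_derivative K (fst (x t)) *v snd (x t)) (at t within {0..1})"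
    using bounded_linear.has_vector_derivative[OF bounded_linear_fst h(2)] e by simp
  show "((\<lambda>t. snd (x t)) has_vector_derivative
      - (1/2) *\<^sub>R grad (\<lambda>y. snd (x t) \<bullet> (K y *v snd (x t))) (fst (x t))) (at t within {0..1})"
    using bounded_linear.has_vector_derivative[OF bounded_linear_snd h(2)] e by simp
qed

lemma ham_field_deriv_adjoint:
  assumes q: "q \<in> M"
  shows "(kernel_grad q p zz - (1/2) *\<^sub>R kernel_hess q p aa, K q *v zz - DK q aa *v p) \<bullet> (dq, dp)
        = (zz, aa) \<bullet> ham_field_deriv (q, p) (dq, dp)"
proof -
  have e1: "kernel_grad q p zz \<bullet> dq = p \<bullet> (DK q dq *v zz)" using inner_kernel_grad[OF q] .
  have e2: "kernel_hess q p aa \<bullet> dq = p \<bullet> (D2K q aa dq *v p)" using inner_kernel_hess[OF q] .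
  have e3: "aa \<bullet> kernel_hess q p dq = p \<bullet> (D2K q dq aa *v p)"
    using inner_kernel_hess[OF q] by (simp add: inner_commute)
  have e4: "D2K q aa dq = D2K q dq aa"
    using K2_symmetric[OF q] .
  have e5: "aa \<bullet> kernel_grad q dp p = dp \<bullet> (DK q aa *v p)"
    using inner_kernel_grad[OF q] by (simp add: inner_commute)
  have e6: "aa \<bullet> kernel_grad q p dp = p \<bullet> (DK q aa *v dp)"
    using inner_kernel_grad[OF q] by (simp add: inner_commute)
  have s1: "p \<bullet> (DK q dq *v zz) = zz \<bullet> (DK q dq *v p)"
    by (rule inner_symmetric_matrix[OF transpose_K1[OF q]])
  have s2: "p \<bullet> (DK q aa *v dp) = dp \<bullet> (DK q aa *v p)"
    by (rule inner_symmetric_matrix[OF transpose_K1[OF q]])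
  have s3: "zz \<bullet> (K q *v dp) = dp \<bullet> (K q *v zz)"
    by (rule inner_symmetric_matrix[OF K_sym[OF q]])
  show ?thesis
    unfolding ham_field_deriv_def
    using e1 e2 e3 e4 e5 e6 s1 s2 s3
    by (simp add: inner_add_right inner_diff_left inner_add_left inner_commute[of "K q *v zz"]
        inner_commute[of "DK q aa *v p" dp] algebra_simps)
qed

end

section \<open>The gradient of \<open>J1\<close>\<close>

sublocale C2_kernel \<subseteq> ham: C1_field "M \<times> UNIV" ham_field ham_field_deriv
  by (rule C1_field_ham_field)

context C2_kernel
begin

lemma J1_eq_near:
  assumes geod: "ham_sol M K q0 p0 q p"
  obtains \<delta> where "\<delta> > 0" "\<And>p'. dist p' p0 < \<delta> \<Longrightarrow>
    J1 M K g q0 p' = (1/2) * (p' \<bullet> (K q0 *v p')) + g (fst (flow_end (M \<times> UNIV) ham_field (q0, p')))"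
proof -
  obtain \<delta> C where \<delta>: "\<delta> > 0" "C \<ge> 0" "\<And>y0. norm (y0 - (q0, p0)) < \<delta> \<Longrightarrow>
      \<exists>y. ode_solution (M \<times> UNIV) ham_field y0 y \<and> (\<forall>t\<in>{0..1}. norm (y t - (q t, p t)) \<le> C * norm (y0 - (q0, p0)))"
    by (rule ham.ode_solution_exists_near[OF ode_solution_of_ham_sol[OF geod]]) simp
  have "J1 M K g q0 p' = (1/2) * (p' \<bullet> (K q0 *v p')) + g (fst (flow_end (M \<times> UNIV) ham_field (q0, p')))"
    if "dist p' p0 < \<delta>" for p'
  proof -
    have "norm ((q0, p') - (q0, p0)) < \<delta>" using that by (simp add: dist_norm)
    then obtain y where y: "ode_solution (M \<times> UNIV) ham_field (q0, p') y"
      using \<delta>(3) by blast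
    have "(THE y1. \<exists>qq pp. ham_sol M K q0 p' qq pp \<and> y1 = qq 1) = fst (y 1)"
    proof (rule the_equality)
      show "\<exists>qq pp. ham_sol M K q0 p' qq pp \<and> fst (y 1) = qq 1"
        using ham_sol_of_ode_solution[OF y] by (intro exI[of _ "\<lambda>t. fst (y t)"] exI[of _ "\<lambda>t. snd (y t)"]) simp
      fix y1 assume "\<exists>qq pp. ham_sol M K q0 p' qq pp \<and> y1 = qq 1"
      then obtain qq pp where qp: "ham_sol M K q0 p' qq pp" "y1 = qq 1" by blast
      have "(qq 1, pp 1) = y 1"
        using ham.ode_solution_unique[OF ode_solution_of_ham_sol[OF qp(1)] y, of 1] by simp
      then show "y1 = fst (y 1)" using qp(2) by (metis fst_conv)
    qed
    then show ?thesis unfolding J1_def ham.flow_end_eq[OF y] by simp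
  qed
  with \<delta>(1) that show ?thesis by blast
qed

lemma endpoint_term_has_derivative:
  assumes geod: "ham_sol M K q0 p0 q p" and Dg: "(g has_derivative Dg) (at (q 1))"
    and lam: "\<And>t. t \<in> {0..1} \<Longrightarrow> (lam has_vector_derivative - lam' t) (at t within {0..1})"
    and adj: "\<And>t h. t \<in> {0..1} \<Longrightarrow> lam' t \<bullet> h = lam t \<bullet> ham_field_deriv (q t, p t) h"
    and lam_1: "\<And>h. lam 1 \<bullet> h = Dg (fst h)"
  shows "((\<lambda>p'. g (fst (flow_end (M \<times> UNIV) ham_field (q0, p')))) has_derivative (\<lambda>v. snd (lam 0) \<bullet> v)) (at p0)"
proof -
  have "((\<lambda>x. g (fst x)) has_derivative (\<lambda>h. Dg (fst h))) (at (q 1, p 1))"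
    by (rule has_derivative_compose[where g=g, OF has_derivative_fst[OF has_derivative_ident]]) (simp add: Dg)
  from ham.adjoint_sensitivity[OF ode_solution_of_ham_sol[OF geod] lam adj this lam_1]
  have "((\<lambda>y0. g (fst (flow_end (M \<times> UNIV) ham_field y0))) has_derivative (\<lambda>h. lam 0 \<bullet> h)) (at (q0, p0))" .
  moreover have "((\<lambda>p'. (q0, p')) has_derivative (\<lambda>v. (0, v))) (at p0)"
    by (auto intro!: derivative_eq_intros)
  ultimately show ?thesis
    using has_derivative_compose[of "\<lambda>p'. (q0, p')"] by (fastforce simp: inner_prod_def)
qed

text \<open>With \<open>\<lambda>(t) = (z(1 - t), \<alpha>(1 - t))\<close>, the backward system for \<open>(z, \<alpha>)\<close> says exactly that
  \<open>\<lambda>\<close> solves the adjoint of the linearized Hamiltonian system along \<open>(q, p)\<close>; this uses the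
  symmetry of \<open>K\<close>, of its derivative and of its second derivative.\<close>

lemma time_reversed_costate_adjoint:
  assumes qM: "\<And>t. t \<in> {0..1} \<Longrightarrow> q t \<in> M"
    and z_ode: "\<forall>t\<in>{0..1}. (z has_vector_derivative
          (grad (\<lambda>x. p (1 - t) \<bullet> (K x *v z t)) (q (1 - t))
           - (1/2) *\<^sub>R frechet_derivative (\<lambda>y. grad (\<lambda>x. p (1 - t) \<bullet> (K x *v p (1 - t))) y)
                          (at (q (1 - t))) (\<alpha> t))) (at t within {0..1})"
    and alpha_ode: "\<forall>t\<in>{0..1}. (\<alpha> has_vector_derivative
          (K (q (1 - t)) *v z t
           - frechet_derivative (\<lambda>y. K y *v p (1 - t)) (at (q (1 - t))) (\<alpha> t))) (at t within {0..1})"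
  obtains lam' where
    "\<And>t. t \<in> {0..1} \<Longrightarrow> ((\<lambda>t. (z (1 - t), \<alpha> (1 - t))) has_vector_derivative - lam' t) (at t within {0..1})"
    "\<And>t h. t \<in> {0..1} \<Longrightarrow> lam' t \<bullet> h = (z (1 - t), \<alpha> (1 - t)) \<bullet> ham_field_deriv (q t, p t) h"
proof
  define lam' where "lam' t = (kernel_grad (q t) (p t) (z (1 - t)) - (1/2) *\<^sub>R kernel_hess (q t) (p t) (\<alpha> (1 - t)),
    K (q t) *v z (1 - t) - DK (q t) (\<alpha> (1 - t)) *v p t)" for t
  fix t :: real assume t: "t \<in> {0..1}"
  then have s: "1 - t \<in> {0..1}" by auto
  have "(\<lambda>t. 1 - t) ` {0..1} = {0::real..1}"
  proof (intro equalityI subsetI)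
    fix x :: real assume "x \<in> {0..1}"
    then show "x \<in> (\<lambda>t. 1 - t) ` {0..1}" by (intro image_eqI[of _ _ "1 - x"]) auto
  qed auto
  then have pd: "((\<lambda>s. (z s, \<alpha> s)) has_vector_derivative lam' t) (at (1 - t) within (\<lambda>t. 1 - t) ` {0..1})"
    using has_vector_derivative_Pair[OF z_ode[rule_format, OF s] alpha_ode[rule_format, OF s]] qM[OF t]
    by (simp add: lam'_def grad_inner_K_mult frechet_derivative_grad_inner_K frechet_derivative_K_mult)
  have "((\<lambda>t. 1 - t) has_vector_derivative -1) (at t within {0..1})"
    by (auto intro!: derivative_eq_intros)
  from vector_diff_chain_within[OF this pd]
  show "((\<lambda>t. (z (1 - t), \<alpha> (1 - t))) has_vector_derivative - lam' t) (at t within {0..1})"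
    by (simp add: o_def)
  show "lam' t \<bullet> h = (z (1 - t), \<alpha> (1 - t)) \<bullet> ham_field_deriv (q t, p t) h" for h
    unfolding lam'_def using ham_field_deriv_adjoint[OF qM[OF t]] by (cases h) simp
qed

end

theorem proposition9:
  fixes M :: "(real^'n) set"
    and K :: "real^'n \<Rightarrow> real^'n^'n"
    and g :: "real^'n \<Rightarrow> real"
    and q0 p0 :: "real^'n"
    and q p z \<alpha> :: "real \<Rightarrow> real^'n"
  assumes M_open: "open M"
    and q0M: "q0 \<in> M"
    and K_sym: "\<forall>x\<in>M. transpose (K x) = K x"
    and K_psd: "\<forall>x\<in>M. \<forall>v. 0 \<le> v \<bullet> (K x *v v)"
    and K_C2: "C2_on M K"
    and g_C1: "C1_on M g"
    and geod: "ham_sol M K q0 p0 q p"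
    and z0: "z 0 = grad g (q 1)"
    and alpha0: "\<alpha> 0 = 0"
    and z_ode: "\<forall>t\<in>{0..1}. (z has_vector_derivative
          (grad (\<lambda>x. p (1 - t) \<bullet> (K x *v z t)) (q (1 - t))
           - (1/2) *\<^sub>R frechet_derivative (\<lambda>y. grad (\<lambda>x. p (1 - t) \<bullet> (K x *v p (1 - t))) y)
                          (at (q (1 - t))) (\<alpha> t))) (at t within {0..1})"
    and alpha_ode: "\<forall>t\<in>{0..1}. (\<alpha> has_vector_derivative
          (K (q (1 - t)) *v z t
           - frechet_derivative (\<lambda>y. K y *v p (1 - t)) (at (q (1 - t))) (\<alpha> t))) (at t within {0..1})"
  shows "(J1 M K g q0 has_derivative (\<lambda>v. (K q0 *v p0 + \<alpha> 1) \<bullet> v)) (at p0)"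
proof -
  obtain K1 K2 where "\<forall>x\<in>M. (K has_derivative blinfun_apply (K1 x)) (at x)"
    "\<forall>x\<in>M. (K1 has_derivative blinfun_apply (K2 x)) (at x)" "continuous_on M K2"
    using K_C2 unfolding C2_on_def C1_on_def by blast
  then interpret C2_kernel M K K1 K2 using M_open K_sym by unfold_locales auto
  have qM: "\<And>t. t \<in> {0..1} \<Longrightarrow> q t \<in> M" using geod unfolding ham_sol_def by auto
  obtain Dg where Dg: "(g has_derivative Dg) (at (q 1))"
    using g_C1 qM[of 1] unfolding C1_on_def by auto
  obtain lam' where
    lam: "\<And>t. t \<in> {0..1} \<Longrightarrow> ((\<lambda>t. (z (1 - t), \<alpha> (1 - t))) has_vector_derivative - lam' t) (at t within {0..1})"
    and adj: "\<And>t h. t \<in> {0..1} \<Longrightarrow> lam' t \<bullet> h = (z (1 - t), \<alpha> (1 - t)) \<bullet> ham_field_deriv (q t, p t) h"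
    using time_reversed_costate_adjoint[OF qM z_ode alpha_ode] by blast
  have "((\<lambda>p'. g (fst (flow_end (M \<times> UNIV) ham_field (q0, p')))) has_derivative (\<lambda>v. \<alpha> 1 \<bullet> v)) (at p0)"
    using endpoint_term_has_derivative[OF geod Dg lam adj] by (simp add: z0 alpha0 inner_grad[OF Dg] inner_prod_def)
  then have deriv: "((\<lambda>p'. (1/2) * (p' \<bullet> (K q0 *v p')) + g (fst (flow_end (M \<times> UNIV) ham_field (q0, p'))))
      has_derivative (\<lambda>v. (K q0 *v p0 + \<alpha> 1) \<bullet> v)) (at p0)"
    using has_derivative_add[OF quadratic_form_has_derivative[OF K_sym[rule_format, OF q0M]]]
    by (simp add: inner_add_left)
  obtain \<delta> where \<delta>: "\<delta> > 0" "\<And>p'. dist p' p0 < \<delta> \<Longrightarrow>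
      J1 M K g q0 p' = (1/2) * (p' \<bullet> (K q0 *v p')) + g (fst (flow_end (M \<times> UNIV) ham_field (q0, p')))"
    using J1_eq_near[OF geod] by blast
  show ?thesis
    by (rule has_derivative_transform_within[OF deriv \<delta>(1) UNIV_I]) (simp add: \<delta>(2))
qed

end
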